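(* Every sentence over the signature $\sigma_1$ derivable in $\mathit{HT}_{\#2}^{\omega}$ from the axioms $D_0$ is provable in $\mathit{HT}_{\#}^{\omega}$.
   Context: $\sigma_1$ is the two-sorted signature (general, integer) with numerals, other precomputed terms (totally ordered, numerals contiguous), integer arithmetic, predicates $p/n$, comparisons $=,\neq,<,>,\leq,\geq$, and predicate constants $\mathit{Atleast}^{\mathbf{X};\mathbf{V}}_F$, $\mathit{Atmost}^{\mathbf{X};\mathbf{V}}_F$; $\sigma_2$ additionally contains $\mathit{Start}^{\mathbf{X};\mathbf{V}}_F$ (last argument integer). $D_0$: $\forall\mathbf{X}\mathbf{V}N(N\leq\overline 0\to\mathit{Start}^{\mathbf{X};\mathbf{V}}_F(\mathbf{X},\mathbf{V},N))$, $\forall\mathbf{X}\mathbf{V}(\mathit{Start}^{\mathbf{X};\mathbf{V}}_F(\mathbf{X},\mathbf{V},\overline 1)\leftrightarrow F)$, $\forall\mathbf{X}\mathbf{V}N(N>\overline 0\to(\mathit{Start}^{\mathbf{X};\mathbf{V}}_F(\mathbf{X},\mathbf{V},N+\overline 1)\leftrightarrow F\land\exists\mathbf{U}(\mathbf{X}<\mathbf{U}\land\mathit{Start}^{\mathbf{X};\mathbf{V}}_F(\mathbf{U},\mathbf{V},N))))$ ($<$ lexicographic). $\mathit{HT}_{\#}^{\omega}$ is intuitionistic natural deduction over $\sigma_1$, and $\mathit{HT}_{\#2}^{\omega}$ the same over $\sigma_2$, each extended by $F\lor(F\to G)\lor\neg G$, $\exists X(F\to\forall XF)$, Std (sentences without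 $p/n$ and without Atleast/Atmost/Start true in the standard interpretation), Defs (the sentences $\forall\mathbf{V}(\mathit{Atleast}^{\mathbf{X};\mathbf{V}}_F(\mathbf{V},r)\leftrightarrow\exists_{\geq r}\mathbf{X}F)$, $\forall\mathbf{V}(\mathit{Atmost}^{\mathbf{X};\mathbf{V}}_F(\mathbf{V},r)\leftrightarrow\exists_{\leq r}\mathbf{X}F)$ for each precomputed $r$, with $\exists_{\geq r}$/$\exists_{\leq r}$ the first-order "at least/at most $r$ values" expansions), and the $\omega$-rules (infer $\Gamma\Rightarrow\forall XF$ from $\Gamma\Rightarrow F^X_t$ for all precomputed $t$; infer $\Gamma\Rightarrow\forall NF$ from $\Gamma\Rightarrow F^N_{\overline n}$ for all integers $n$). *)

theory Defs
  imports Main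
begin

section \<open>Syntax of the two-sorted language\<close>

text \<open>Precomputed terms form an abstract linearly ordered type 'p; the numerals are
  given by an injection num :: int => 'p (assumed strictly monotone and with
  contiguous range in the main theorem).  Variables are general (GV) or integer (IV).\<close>

datatype var = GV nat | IV nat

datatype 'p trm =
    Pre 'p                       \<comment> \<open>precomputed term (numerals are Pre (num n))\<close>
  | Var var
  | Plus "'p trm" "'p trm"
  | Minus "'p trm" "'p trm"
  | Times "'p trm" "'p trm"

datatype cmp = Eq | Ne | Lt | Gt | Le | Ge

text \<open>Atleast X V F ts r is the atom Atleast^{X;V}_F(ts, r);
  Start X V F xs vs n is the atom Start^{X;V}_F(xs, vs, n).
  Pred p ts is the atom p/n(ts) with n = length ts.\<close>

datatype 'p form =
    Bot
  | Pred nat "'p trm list"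
  | Cmp cmp "'p trm" "'p trm"
  | Atleast "var list" "var list" "'p form" "'p trm list" "'p trm"
  | Atmost "var list" "var list" "'p form" "'p trm list" "'p trm"
  | Start "var list" "var list" "'p form" "'p trm list" "'p trm list" "'p trm"
  | And "'p form" "'p form"
  | Or "'p form" "'p form"
  | Imp "'p form" "'p form"
  | All var "'p form"
  | Ex var "'p form"

definition Neg :: "'p form \<Rightarrow> 'p form" where "Neg F = Imp F Bot"
definition Top :: "'p form" where "Top = Imp Bot Bot"
definition Iff :: "'p form \<Rightarrow> 'p form \<Rightarrow> 'p form" where "Iff F G = And (Imp F G) (Imp G F)"

fun isG :: "var \<Rightarrow> bool" where "isG (GV n) = True" | "isG (IV n) = False"
fun vidx :: "var \<Rightarrow> nat" where "vidx (GV n) = n" | "vidx (IV n) = n"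

fun tvars :: "'p trm \<Rightarrow> var set" where
  "tvars (Pre p) = {}"
| "tvars (Var v) = {v}"
| "tvars (Plus a b) = tvars a \<union> tvars b"
| "tvars (Minus a b) = tvars a \<union> tvars b"
| "tvars (Times a b) = tvars a \<union> tvars b"

fun fv :: "'p form \<Rightarrow> var set" where
  "fv Bot = {}"
| "fv (Pred p ts) = \<Union>(tvars ` set ts)"
| "fv (Cmp c a b) = tvars a \<union> tvars b"
| "fv (Atleast X V G ts r) = \<Union>(tvars ` set ts) \<union> tvars r"
| "fv (Atmost X V G ts r) = \<Union>(tvars ` set ts) \<union> tvars r"
| "fv (Start X V G xs vs n) = \<Union>(tvars ` set (xs @ vs)) \<union> tvars n"
| "fv (And F G) = fv F \<union> fv G"
| "fv (Or F G) = fv F \<union> fv G"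
| "fv (Imp F G) = fv F \<union> fv G"
| "fv (All v F) = fv F - {v}"
| "fv (Ex v F) = fv F - {v}"

text \<open>All variables occurring anywhere (used only to pick fresh variables).\<close>
fun allvars :: "'p form \<Rightarrow> var set" where
  "allvars Bot = {}"
| "allvars (Pred p ts) = \<Union>(tvars ` set ts)"
| "allvars (Cmp c a b) = tvars a \<union> tvars b"
| "allvars (Atleast X V G ts r) = set X \<union> set V \<union> allvars G \<union> \<Union>(tvars ` set ts) \<union> tvars r"
| "allvars (Atmost X V G ts r) = set X \<union> set V \<union> allvars G \<union> \<Union>(tvars ` set ts) \<union> tvars r"
| "allvars (Start X V G xs vs n) = set X \<union> set V \<union> allvars G \<union> \<Union>(tvars ` set (xs @ vs)) \<union> tvars n"
| "allvars (And F G) = allvars F \<union> allvars G"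
| "allvars (Or F G) = allvars F \<union> allvars G"
| "allvars (Imp F G) = allvars F \<union> allvars G"
| "allvars (All v F) = insert v (allvars F)"
| "allvars (Ex v F) = insert v (allvars F)"

fun substt :: "var \<Rightarrow> 'p trm \<Rightarrow> 'p trm \<Rightarrow> 'p trm" where
  "substt v s (Pre p) = Pre p"
| "substt v s (Var w) = (if w = v then s else Var w)"
| "substt v s (Plus a b) = Plus (substt v s a) (substt v s b)"
| "substt v s (Minus a b) = Minus (substt v s a) (substt v s b)"
| "substt v s (Times a b) = Times (substt v s a) (substt v s b)"

text \<open>Substitution of s for the free occurrences of v (no renaming; used only
  together with the side condition freefor).\<close>
fun subst :: "var \<Rightarrow> 'p trm \<Rightarrow> 'p form \<Rightarrow> 'p form" where
  "subst v s Bot = Bot"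
| "subst v s (Pred p ts) = Pred p (map (substt v s) ts)"
| "subst v s (Cmp c a b) = Cmp c (substt v s a) (substt v s b)"
| "subst v s (Atleast X V G ts r) = Atleast X V G (map (substt v s) ts) (substt v s r)"
| "subst v s (Atmost X V G ts r) = Atmost X V G (map (substt v s) ts) (substt v s r)"
| "subst v s (Start X V G xs vs n) = Start X V G (map (substt v s) xs) (map (substt v s) vs) (substt v s n)"
| "subst v s (And F G) = And (subst v s F) (subst v s G)"
| "subst v s (Or F G) = Or (subst v s F) (subst v s G)"
| "subst v s (Imp F G) = Imp (subst v s F) (subst v s G)"
| "subst v s (All w F) = (if w = v then All w F else All w (subst v s F))"
| "subst v s (Ex w F) = (if w = v then Ex w F else Ex w (subst v s F))"

fun freefor :: "'p trm \<Rightarrow> var \<Rightarrow> 'p form \<Rightarrow> bool" where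
  "freefor s v (And F G) = (freefor s v F \<and> freefor s v G)"
| "freefor s v (Or F G) = (freefor s v F \<and> freefor s v G)"
| "freefor s v (Imp F G) = (freefor s v F \<and> freefor s v G)"
| "freefor s v (All w F) = (v \<notin> fv (All w F) \<or> (w \<notin> tvars s \<and> freefor s v F))"
| "freefor s v (Ex w F) = (v \<notin> fv (Ex w F) \<or> (w \<notin> tvars s \<and> freefor s v F))"
| "freefor s v _ = True"

section \<open>Well-sortedness and signatures\<close>

fun itrm :: "(int \<Rightarrow> 'p) \<Rightarrow> 'p trm \<Rightarrow> bool" where
  "itrm num (Pre p) = (\<exists>k. p = num k)"
| "itrm num (Var v) = (\<not> isG v)"
| "itrm num (Plus a b) = (itrm num a \<and> itrm num b)"
| "itrm num (Minus a b) = (itrm num a \<and> itrm num b)"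
| "itrm num (Times a b) = (itrm num a \<and> itrm num b)"

definition gtrm :: "(int \<Rightarrow> 'p) \<Rightarrow> 'p trm \<Rightarrow> bool" where
  "gtrm num t = (case t of Pre p \<Rightarrow> True | Var v \<Rightarrow> True | _ \<Rightarrow> itrm num t)"

definition sortok :: "(int \<Rightarrow> 'p) \<Rightarrow> var \<Rightarrow> 'p trm \<Rightarrow> bool" where
  "sortok num v t = (if isG v then gtrm num t else itrm num t)"

fun base :: "'p form \<Rightarrow> bool" where
  "base (Atleast X V G ts r) = False"
| "base (Atmost X V G ts r) = False"
| "base (Start X V G xs vs n) = False"
| "base (And F G) = (base F \<and> base G)"
| "base (Or F G) = (base F \<and> base G)"
| "base (Imp F G) = (base F \<and> base G)"
| "base (All v F) = base F"
| "base (Ex v F) = base F"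
| "base _ = True"

fun noStart :: "'p form \<Rightarrow> bool" where
  "noStart (Start X V G xs vs n) = False"
| "noStart (And F G) = (noStart F \<and> noStart G)"
| "noStart (Or F G) = (noStart F \<and> noStart G)"
| "noStart (Imp F G) = (noStart F \<and> noStart G)"
| "noStart (All v F) = noStart F"
| "noStart (Ex v F) = noStart F"
| "noStart _ = True"

fun nopa :: "'p form \<Rightarrow> bool" where
  "nopa Bot = True"
| "nopa (Cmp c a b) = True"
| "nopa (And F G) = (nopa F \<and> nopa G)"
| "nopa (Or F G) = (nopa F \<and> nopa G)"
| "nopa (Imp F G) = (nopa F \<and> nopa G)"
| "nopa (All v F) = nopa F"
| "nopa (Ex v F) = nopa F"
| "nopa _ = False"

definition aggok :: "var list \<Rightarrow> var list \<Rightarrow> 'p form \<Rightarrow> bool" where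
  "aggok X V G = (distinct (X @ V) \<and> (\<forall>v\<in>set (X @ V). isG v) \<and> base G \<and> fv G \<subseteq> set X \<union> set V)"

fun wf :: "(int \<Rightarrow> 'p) \<Rightarrow> 'p form \<Rightarrow> bool" where
  "wf num Bot = True"
| "wf num (Pred p ts) = (\<forall>t\<in>set ts. gtrm num t)"
| "wf num (Cmp c a b) = (gtrm num a \<and> gtrm num b)"
| "wf num (Atleast X V G ts r) = (aggok X V G \<and> wf num G \<and> length ts = length V
      \<and> (\<forall>t\<in>set ts. gtrm num t) \<and> gtrm num r)"
| "wf num (Atmost X V G ts r) = (aggok X V G \<and> wf num G \<and> length ts = length V
      \<and> (\<forall>t\<in>set ts. gtrm num t) \<and> gtrm num r)"
| "wf num (Start X V G xs vs n) = (aggok X V G \<and> wf num G \<and> length xs = length X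
      \<and> length vs = length V \<and> (\<forall>t\<in>set (xs @ vs). gtrm num t) \<and> itrm num n)"
| "wf num (And F G) = (wf num F \<and> wf num G)"
| "wf num (Or F G) = (wf num F \<and> wf num G)"
| "wf num (Imp F G) = (wf num F \<and> wf num G)"
| "wf num (All v F) = wf num F"
| "wf num (Ex v F) = wf num F"

definition aggwf :: "(int \<Rightarrow> 'p) \<Rightarrow> var list \<Rightarrow> var list \<Rightarrow> 'p form \<Rightarrow> bool" where
  "aggwf num X V G = (aggok X V G \<and> wf num G)"

definition sig1 :: "(int \<Rightarrow> 'p) \<Rightarrow> 'p form \<Rightarrow> bool" where
  "sig1 num F = (wf num F \<and> noStart F)"
definition sig2 :: "(int \<Rightarrow> 'p) \<Rightarrow> 'p form \<Rightarrow> bool" where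
  "sig2 num F = wf num F"

definition sentence1 :: "(int \<Rightarrow> 'p) \<Rightarrow> 'p form \<Rightarrow> bool" where
  "sentence1 num F = (sig1 num F \<and> fv F = {})"

section \<open>Standard interpretation (for Std)\<close>

definition toint :: "(int \<Rightarrow> 'p) \<Rightarrow> 'p \<Rightarrow> int" where
  "toint num p = (THE k. num k = p)"

fun tval :: "(int \<Rightarrow> 'p) \<Rightarrow> (var \<Rightarrow> 'p) \<Rightarrow> 'p trm \<Rightarrow> 'p" where
  "tval num e (Pre p) = p"
| "tval num e (Var v) = e v"
| "tval num e (Plus a b) = num (toint num (tval num e a) + toint num (tval num e b))"
| "tval num e (Minus a b) = num (toint num (tval num e a) - toint num (tval num e b))"
| "tval num e (Times a b) = num (toint num (tval num e a) * toint num (tval num e b))"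

fun cmpv :: "cmp \<Rightarrow> 'p::linorder \<Rightarrow> 'p \<Rightarrow> bool" where
  "cmpv Eq x y = (x = y)"
| "cmpv Ne x y = (x \<noteq> y)"
| "cmpv Lt x y = (x < y)"
| "cmpv Gt x y = (x > y)"
| "cmpv Le x y = (x \<le> y)"
| "cmpv Ge x y = (x \<ge> y)"

text \<open>Truth in the standard interpretation (general variables range over precomputed
  terms, integer variables over numerals); only meaningful for nopa formulas.\<close>
fun sat :: "(int \<Rightarrow> 'p::linorder) \<Rightarrow> (var \<Rightarrow> 'p) \<Rightarrow> 'p form \<Rightarrow> bool" where
  "sat num e Bot = False"
| "sat num e (Pred p ts) = False"
| "sat num e (Cmp c a b) = cmpv c (tval num e a) (tval num e b)"
| "sat num e (Atleast X V G ts r) = False"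
| "sat num e (Atmost X V G ts r) = False"
| "sat num e (Start X V G xs vs n) = False"
| "sat num e (And F G) = (sat num e F \<and> sat num e G)"
| "sat num e (Or F G) = (sat num e F \<or> sat num e G)"
| "sat num e (Imp F G) = (sat num e F \<longrightarrow> sat num e G)"
| "sat num e (All v F) = (if isG v then (\<forall>p. sat num (e(v := p)) F)
                          else (\<forall>k. sat num (e(v := num k)) F))"
| "sat num e (Ex v F) = (if isG v then (\<exists>p. sat num (e(v := p)) F)
                          else (\<exists>k. sat num (e(v := num k)) F))"

definition Std :: "(int \<Rightarrow> 'p::linorder) \<Rightarrow> 'p form set" where
  "Std num = {F. wf num F \<and> fv F = {} \<and> nopa F \<and> (\<forall>e. sat num e F)}"

section \<open>Counting formulas and Defs\<close>

definition alls :: "var list \<Rightarrow> 'p form \<Rightarrow> 'p form" where "alls vs F = foldr All vs F"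
definition exs :: "var list \<Rightarrow> 'p form \<Rightarrow> 'p form" where "exs vs F = foldr Ex vs F"
definition conjs :: "'p form list \<Rightarrow> 'p form" where "conjs Fs = foldr And Fs Top"
definition disjs :: "'p form list \<Rightarrow> 'p form" where "disjs Fs = foldr Or Fs Bot"

definition tupeq :: "var list \<Rightarrow> var list \<Rightarrow> 'p form" where
  "tupeq xs ys = conjs (map2 (\<lambda>a b. Cmp Eq (Var a) (Var b)) xs ys)"

definition pairs :: "nat \<Rightarrow> (nat \<times> nat) list" where
  "pairs n = [(i, j). i \<leftarrow> [0..<n], j \<leftarrow> [0..<n], i < j]"

definition freshb :: "'p form \<Rightarrow> var list \<Rightarrow> nat" where
  "freshb G X = Suc (Max (insert 0 (vidx ` (allvars G \<union> set X))))"

definition copyvars :: "nat \<Rightarrow> nat \<Rightarrow> nat \<Rightarrow> var list" where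
  "copyvars b k i = map (\<lambda>j. GV (b + i * k + j)) [0..<k]"

definition renameF :: "var list \<Rightarrow> var list \<Rightarrow> 'p form \<Rightarrow> 'p form" where
  "renameF X Y G = foldr (\<lambda>(x, y) H. subst x (Var y) H) (zip X Y) G"

text \<open>exists_{>= r} X G : "there are at least r values of the tuple X satisfying G"\<close>
definition atleastF :: "(int \<Rightarrow> 'p::linorder) \<Rightarrow> var list \<Rightarrow> 'p form \<Rightarrow> 'p \<Rightarrow> 'p form" where
  "atleastF num X G r =
    (let b = freshb G X; Y = copyvars b (length X); H = (\<lambda>i. renameF X (Y i) G) in
     if (\<exists>n. r = num n) then
       (let n = toint num r in
        if n \<le> 0 then Top
        else exs (concat (map Y [0..<nat n]))
               (And (conjs (map H [0..<nat n]))
                    (conjs (map (\<lambda>(i, j). Neg (tupeq (Y i) (Y j))) (pairs (nat n))))))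
     else if (\<forall>n. r < num n) then Top else Bot)"

text \<open>exists_{<= r} X G : "there are at most r values of the tuple X satisfying G"\<close>
definition atmostF :: "(int \<Rightarrow> 'p::linorder) \<Rightarrow> var list \<Rightarrow> 'p form \<Rightarrow> 'p \<Rightarrow> 'p form" where
  "atmostF num X G r =
    (let b = freshb G X; Y = copyvars b (length X); H = (\<lambda>i. renameF X (Y i) G) in
     if (\<exists>n. r = num n) then
       (let n = toint num r in
        if n < 0 then Bot
        else alls (concat (map Y [0..<nat n + 1]))
               (Imp (conjs (map H [0..<nat n + 1]))
                    (disjs (map (\<lambda>(i, j). tupeq (Y i) (Y j)) (pairs (nat n + 1))))))
     else if (\<forall>n. r < num n) then Bot else Top)"

definition Defs :: "(int \<Rightarrow> 'p::linorder) \<Rightarrow> 'p form set" where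
  "Defs num =
     {alls V (Iff (Atleast X V G (map Var V) (Pre r)) (atleastF num X G r)) | X V G r. aggwf num X V G}
   \<union> {alls V (Iff (Atmost X V G (map Var V) (Pre r)) (atmostF num X G r)) | X V G r. aggwf num X V G}"

section \<open>The axioms D_0 for Start\<close>

fun lexless :: "'p trm list \<Rightarrow> 'p trm list \<Rightarrow> 'p form" where
  "lexless (x # xs) (u # us) = Or (Cmp Lt x u) (And (Cmp Eq x u) (lexless xs us))"
| "lexless _ _ = Bot"

definition D0 :: "(int \<Rightarrow> 'p) \<Rightarrow> 'p form set" where
  "D0 num = \<Union> {(let b = freshb G (X @ V); N = IV b;
                   U = map (\<lambda>j. GV (b + 1 + j)) [0..<length X];
                   Xs = map Var X; Vs = map Var V; Us = map Var U in
      { alls (X @ V @ [N]) (Imp (Cmp Le (Var N) (Pre (num 0))) (Start X V G Xs Vs (Var N))),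
        alls (X @ V) (Iff (Start X V G Xs Vs (Pre (num 1))) G),
        alls (X @ V @ [N]) (Imp (Cmp Gt (Var N) (Pre (num 0)))
           (Iff (Start X V G Xs Vs (Plus (Var N) (Pre (num 1))))
                (And G (exs U (And (lexless Xs Us) (Start X V G Us Vs (Var N)))))))})
     | X V G. aggwf num X V G}"

section \<open>The deductive systems\<close>

definition HTax :: "(int \<Rightarrow> 'p::linorder) \<Rightarrow> 'p form set" where
  "HTax num = {Or F (Or (Imp F G) (Neg G)) | F G. True}
            \<union> {Ex (GV n) (Imp F (All (GV n) F)) | n F. True}
            \<union> Std num \<union> Defs num"

definition ok :: "('p form \<Rightarrow> bool) \<Rightarrow> 'p form set \<Rightarrow> 'p form \<Rightarrow> bool" where
  "ok L \<Gamma> F = (finite \<Gamma> \<and> (\<forall>G\<in>\<Gamma>. L G) \<and> L F)"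

text \<open>Every sequent in a derivation is required to be over L.\<close>
inductive deriv :: "(int \<Rightarrow> 'p) \<Rightarrow> ('p form \<Rightarrow> bool) \<Rightarrow> 'p form set \<Rightarrow> 'p form set \<Rightarrow> 'p form \<Rightarrow> bool"
  for num L A where
  ax: "F \<in> A \<Longrightarrow> ok L \<Gamma> F \<Longrightarrow> deriv num L A \<Gamma> F"
| hyp: "F \<in> \<Gamma> \<Longrightarrow> ok L \<Gamma> F \<Longrightarrow> deriv num L A \<Gamma> F"
| weak: "deriv num L A \<Gamma> F \<Longrightarrow> \<Gamma> \<subseteq> \<Delta> \<Longrightarrow> ok L \<Delta> F \<Longrightarrow> deriv num L A \<Delta> F"
| botE: "deriv num L A \<Gamma> Bot \<Longrightarrow> ok L \<Gamma> F \<Longrightarrow> deriv num L A \<Gamma> F"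
| andI: "deriv num L A \<Gamma> F \<Longrightarrow> deriv num L A \<Gamma> G \<Longrightarrow> ok L \<Gamma> (And F G) \<Longrightarrow> deriv num L A \<Gamma> (And F G)"
| andE1: "deriv num L A \<Gamma> (And F G) \<Longrightarrow> ok L \<Gamma> F \<Longrightarrow> deriv num L A \<Gamma> F"
| andE2: "deriv num L A \<Gamma> (And F G) \<Longrightarrow> ok L \<Gamma> G \<Longrightarrow> deriv num L A \<Gamma> G"
| orI1: "deriv num L A \<Gamma> F \<Longrightarrow> ok L \<Gamma> (Or F G) \<Longrightarrow> deriv num L A \<Gamma> (Or F G)"
| orI2: "deriv num L A \<Gamma> G \<Longrightarrow> ok L \<Gamma> (Or F G) \<Longrightarrow> deriv num L A \<Gamma> (Or F G)"
| orE: "deriv num L A \<Gamma> (Or F G) \<Longrightarrow> deriv num L A (insert F \<Gamma>) H \<Longrightarrow>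
        deriv num L A (insert G \<Gamma>) H \<Longrightarrow> ok L \<Gamma> H \<Longrightarrow> deriv num L A \<Gamma> H"
| impI: "deriv num L A (insert F \<Gamma>) G \<Longrightarrow> ok L \<Gamma> (Imp F G) \<Longrightarrow> deriv num L A \<Gamma> (Imp F G)"
| impE: "deriv num L A \<Gamma> F \<Longrightarrow> deriv num L A \<Gamma> (Imp F G) \<Longrightarrow> ok L \<Gamma> G \<Longrightarrow> deriv num L A \<Gamma> G"
| allI: "deriv num L A \<Gamma> F \<Longrightarrow> v \<notin> \<Union>(fv ` \<Gamma>) \<Longrightarrow> ok L \<Gamma> (All v F) \<Longrightarrow>
        deriv num L A \<Gamma> (All v F)"
| allE: "deriv num L A \<Gamma> (All v F) \<Longrightarrow> sortok num v t \<Longrightarrow> freefor t v F \<Longrightarrow>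
        ok L \<Gamma> (subst v t F) \<Longrightarrow> deriv num L A \<Gamma> (subst v t F)"
| exI: "deriv num L A \<Gamma> (subst v t F) \<Longrightarrow> sortok num v t \<Longrightarrow> freefor t v F \<Longrightarrow>
        ok L \<Gamma> (Ex v F) \<Longrightarrow> deriv num L A \<Gamma> (Ex v F)"
| exE: "deriv num L A \<Gamma> (Ex v F) \<Longrightarrow> deriv num L A (insert F \<Gamma>) G \<Longrightarrow>
        v \<notin> fv G \<union> \<Union>(fv ` \<Gamma>) \<Longrightarrow> ok L \<Gamma> G \<Longrightarrow> deriv num L A \<Gamma> G"
| eqRefl: "ok L \<Gamma> (Cmp Eq t t) \<Longrightarrow> deriv num L A \<Gamma> (Cmp Eq t t)"
| eqSubst: "deriv num L A \<Gamma> (Cmp Eq s t) \<Longrightarrow> deriv num L A \<Gamma> (subst v s F) \<Longrightarrow>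
        sortok num v s \<Longrightarrow> sortok num v t \<Longrightarrow> freefor s v F \<Longrightarrow> freefor t v F \<Longrightarrow>
        ok L \<Gamma> (subst v t F) \<Longrightarrow> deriv num L A \<Gamma> (subst v t F)"
| omegaG: "(\<And>p. deriv num L A \<Gamma> (subst (GV n) (Pre p) F)) \<Longrightarrow> ok L \<Gamma> (All (GV n) F) \<Longrightarrow>
        deriv num L A \<Gamma> (All (GV n) F)"
| omegaI: "(\<And>k. deriv num L A \<Gamma> (subst (IV n) (Pre (num k)) F)) \<Longrightarrow> ok L \<Gamma> (All (IV n) F) \<Longrightarrow>
        deriv num L A \<Gamma> (All (IV n) F)"

definition HTsharp :: "(int \<Rightarrow> 'p::linorder) \<Rightarrow> 'p form \<Rightarrow> bool" where
  "HTsharp num F = deriv num (sig1 num) (HTax num) {} F"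

definition HTsharp2_from :: "(int \<Rightarrow> 'p::linorder) \<Rightarrow> 'p form set \<Rightarrow> 'p form \<Rightarrow> bool" where
  "HTsharp2_from num Ax F = deriv num (sig2 num) (HTax num \<union> Ax) {} F"

end

(*
  Over the standard model, Start^{X;V}_G(x, v, n) says that G(x, v) holds and x begins a
  lexicographically increasing chain of n tuples u with G(u, v); equivalently, G(x, v) holds
  and at least n tuples u >= x satisfy G(u, v).  Replacing every Start atom by the Atleast
  atom expressing the latter commutes with substitution and fixes every sigma_1 formula and
  every axiom of HT_#^omega, so it turns a derivation in HT_#2^omega from D_0 into a
  derivation in HT_#^omega from the translated D_0 axioms.

  The translated axioms are derivable in HT_#^omega.  By the omega-rules it suffices to
  derive their ground instances; there Defs unfolds each Atleast atom into an explicit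
  counting formula, and all comparisons of concrete tuples are decided by Std.  What is left
  is the combinatorics of the successor axiom: among k + 1 distinct tuples above x there is
  one, u > x, with k distinct tuples above u; conversely x together with k distinct tuples
  above some u > x are k + 1 distinct tuples above x.
*)

theory Submission
  imports Defs "HOL-Library.List_Lexorder"
begin

section \<open>Simultaneous substitution\<close>

fun tsubst :: "(var \<Rightarrow> 'p trm) \<Rightarrow> 'p trm \<Rightarrow> 'p trm" where
  "tsubst s (Pre p) = Pre p"
| "tsubst s (Var v) = s v"
| "tsubst s (Plus a b) = Plus (tsubst s a) (tsubst s b)"
| "tsubst s (Minus a b) = Minus (tsubst s a) (tsubst s b)"
| "tsubst s (Times a b) = Times (tsubst s a) (tsubst s b)"

fun fsubst :: "(var \<Rightarrow> 'p trm) \<Rightarrow> 'p form \<Rightarrow> 'p form" where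
  "fsubst s Bot = Bot"
| "fsubst s (Pred p ts) = Pred p (map (tsubst s) ts)"
| "fsubst s (Cmp c a b) = Cmp c (tsubst s a) (tsubst s b)"
| "fsubst s (Atleast X V G ts r) = Atleast X V G (map (tsubst s) ts) (tsubst s r)"
| "fsubst s (Atmost X V G ts r) = Atmost X V G (map (tsubst s) ts) (tsubst s r)"
| "fsubst s (Start X V G xs vs n) = Start X V G (map (tsubst s) xs) (map (tsubst s) vs) (tsubst s n)"
| "fsubst s (And F G) = And (fsubst s F) (fsubst s G)"
| "fsubst s (Or F G) = Or (fsubst s F) (fsubst s G)"
| "fsubst s (Imp F G) = Imp (fsubst s F) (fsubst s G)"
| "fsubst s (All w F) = All w (fsubst (s(w := Var w)) F)"
| "fsubst s (Ex w F) = Ex w (fsubst (s(w := Var w)) F)"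

fun bvars :: "'p form \<Rightarrow> var set" where
  "bvars (And F G) = bvars F \<union> bvars G"
| "bvars (Or F G) = bvars F \<union> bvars G"
| "bvars (Imp F G) = bvars F \<union> bvars G"
| "bvars (All v F) = insert v (bvars F)"
| "bvars (Ex v F) = insert v (bvars F)"
| "bvars _ = {}"

lemma tsubst_Var[simp]: "tsubst Var t = t"
  by (induction t) auto

lemma tsubst_Var_eq_id[simp]: "tsubst Var = (\<lambda>t. t)"
  by (rule ext) simp

lemma fsubst_Var[simp]: "fsubst Var F = F"
  by (induction F) (auto simp: fun_upd_idem_iff)

lemma tsubst_cong: "(\<And>v. v \<in> tvars t \<Longrightarrow> s v = s' v) \<Longrightarrow> tsubst s t = tsubst s' t"
  by (induction t) auto

lemma fsubst_cong: "(\<And>v. v \<in> fv F \<Longrightarrow> s v = s' v) \<Longrightarrow> fsubst s F = fsubst s' F"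
proof (induction F arbitrary: s s')
  case (All w F) show ?case by (simp, rule All.IH) (use All.prems in auto)
next
  case (Ex w F) show ?case by (simp, rule Ex.IH) (use Ex.prems in auto)
next
  case (And F1 F2) show ?case by (simp, intro conjI And.IH) (use And.prems in auto)
next
  case (Or F1 F2) show ?case by (simp, intro conjI Or.IH) (use Or.prems in auto)
next
  case (Imp F1 F2) show ?case by (simp, intro conjI Imp.IH) (use Imp.prems in auto)
qed (auto intro!: map_cong tsubst_cong, blast)

lemma substt_eq_tsubst: "substt v s t = tsubst (Var(v := s)) t"
  by (induction t) auto

lemma subst_eq_fsubst: "subst v s F = fsubst (Var(v := s)) F"
proof (induction F)
  case (All w F)
  show ?case
  proof (cases "w = v")
    case True
    have "(Var(v := s))(v := Var v) = Var" by (rule ext) simp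
    then show ?thesis using True by (simp only: subst.simps fsubst.simps fsubst_Var) simp
  next
    case False
    have "(Var(v := s))(w := Var w) = Var(v := s)" using False by (intro ext) simp
    then show ?thesis using False All.IH by (simp only: subst.simps fsubst.simps if_False)
  qed
next
  case (Ex w F)
  show ?case
  proof (cases "w = v")
    case True
    have "(Var(v := s))(v := Var v) = Var" by (rule ext) simp
    then show ?thesis using True by (simp only: subst.simps fsubst.simps fsubst_Var) simp
  next
    case False
    have "(Var(v := s))(w := Var w) = Var(v := s)" using False by (intro ext) simp
    then show ?thesis using False Ex.IH by (simp only: subst.simps fsubst.simps if_False)
  qed
qed (auto simp: substt_eq_tsubst fun_upd_def)

lemma tsubst_tsubst: "tsubst s (tsubst t x) = tsubst (\<lambda>v. tsubst s (t v)) x"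
  by (induction x) auto

lemma tsubst_comp_Var[simp]: "tsubst s \<circ> Var = s"
  by (rule ext) simp

lemma map_tsubst_Var: "map (tsubst s) (map Var vs) = map s vs"
  by simp

definition capture_free :: "(var \<Rightarrow> 'p trm) \<Rightarrow> 'p form \<Rightarrow> bool" where
  "capture_free t F = (\<forall>v. t v \<noteq> Var v \<longrightarrow> tvars (t v) \<inter> bvars F = {})"

lemma tsubst_comp_fun_upd:
  assumes "\<And>v. t v \<noteq> Var v \<Longrightarrow> w \<notin> tvars (t v)"
  shows "(\<lambda>v. tsubst (s(w := Var w)) ((t(w := Var w)) v)) = (\<lambda>v. tsubst s (t v))(w := Var w)"
proof
  fix v
  show "tsubst (s(w := Var w)) ((t(w := Var w)) v) = ((\<lambda>v. tsubst s (t v))(w := Var w)) v"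
  proof (cases "v = w")
    case False
    then have "w \<notin> tvars (t v)" using assms by (cases "t v = Var v") auto
    then show ?thesis using False by (auto intro!: tsubst_cong)
  qed simp
qed

lemma fsubst_fsubst: "capture_free t F \<Longrightarrow> fsubst s (fsubst t F) = fsubst (\<lambda>v. tsubst s (t v)) F"
proof (induction F arbitrary: s t)
  case (All w F)
  have cf: "capture_free (t(w := Var w)) F" using All.prems by (auto simp: capture_free_def)
  have eq: "(\<lambda>v. tsubst (s(w := Var w)) ((t(w := Var w)) v)) = (\<lambda>v. tsubst s (t v))(w := Var w)"
    by (rule tsubst_comp_fun_upd) (use All.prems in \<open>auto simp: capture_free_def\<close>)
  show ?case by (simp only: fsubst.simps All.IH[OF cf] eq)
next
  case (Ex w F)
  have cf: "capture_free (t(w := Var w)) F" using Ex.prems by (auto simp: capture_free_def)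
  have eq: "(\<lambda>v. tsubst (s(w := Var w)) ((t(w := Var w)) v)) = (\<lambda>v. tsubst s (t v))(w := Var w)"
    by (rule tsubst_comp_fun_upd) (use Ex.prems in \<open>auto simp: capture_free_def\<close>)
  show ?case by (simp only: fsubst.simps Ex.IH[OF cf] eq)
next
  case (And F G)
  have "capture_free t F" "capture_free t G" using And.prems by (auto simp: capture_free_def)
  then show ?case using And.IH by simp
next
  case (Or F G)
  have "capture_free t F" "capture_free t G" using Or.prems by (auto simp: capture_free_def)
  then show ?case using Or.IH by simp
next
  case (Imp F G)
  have "capture_free t F" "capture_free t G" using Imp.prems by (auto simp: capture_free_def)
  then show ?case using Imp.IH by simp
qed (auto simp: tsubst_tsubst)


lemma bvars_fsubst[simp]: "bvars (fsubst s F) = bvars F"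
  by (induction F arbitrary: s) auto

lemma tvars_tsubst: "tvars (tsubst s t) = (\<Union>v\<in>tvars t. tvars (s v))"
  by (induction t) auto

lemma fv_fsubst: "fv (fsubst s F) \<subseteq> (\<Union>v\<in>fv F. tvars (s v))"
proof (induction F arbitrary: s)
  case (All w F)
  have "fv (fsubst (s(w := Var w)) F) \<subseteq> (\<Union>v\<in>fv F. tvars ((s(w := Var w)) v))" by (rule All.IH)
  also have "\<dots> \<subseteq> insert w (\<Union>v\<in>fv F - {w}. tvars (s v))" by (auto split: if_splits)
  finally show ?case by auto
next
  case (Ex w F)
  have "fv (fsubst (s(w := Var w)) F) \<subseteq> (\<Union>v\<in>fv F. tvars ((s(w := Var w)) v))" by (rule Ex.IH)
  also have "\<dots> \<subseteq> insert w (\<Union>v\<in>fv F - {w}. tvars (s v))" by (auto split: if_splits)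
  finally show ?case by auto
next
  case (And F G) show ?case using And.IH[of s] by auto
next
  case (Or F G) show ?case using Or.IH[of s] by auto
next
  case (Imp F G) show ?case using Imp.IH[of s] by auto
qed (auto simp: tvars_tsubst)

lemma freefor_Pre[simp]: "freefor (Pre p) v F"
  by (induction F) auto

lemma freefor_Var_self[simp]: "freefor (Var v) v F"
  by (induction F) auto

lemma subst_self[simp]: "subst v (Var v) F = F"
  by (simp add: subst_eq_fsubst)

section \<open>Syntactic invariants\<close>

lemma alls_Nil[simp]: "alls [] F = F" and alls_Cons[simp]: "alls (v # vs) F = All v (alls vs F)"
  by (auto simp: alls_def)
lemma exs_Nil[simp]: "exs [] F = F" and exs_Cons[simp]: "exs (v # vs) F = Ex v (exs vs F)"
  by (auto simp: exs_def)
lemma conjs_Nil[simp]: "conjs [] = Top" and conjs_Cons[simp]: "conjs (F # Fs) = And F (conjs Fs)"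
  by (auto simp: conjs_def)
lemma disjs_Nil[simp]: "disjs [] = Bot" and disjs_Cons[simp]: "disjs (F # Fs) = Or F (disjs Fs)"
  by (auto simp: disjs_def)

lemma alls_append[simp]: "alls (xs @ ys) F = alls xs (alls ys F)"
  by (induction xs) auto
lemma exs_append[simp]: "exs (xs @ ys) F = exs xs (exs ys F)"
  by (induction xs) auto

lemma fv_alls[simp]: "fv (alls vs F) = fv F - set vs"
  by (induction vs) auto
lemma fv_exs[simp]: "fv (exs vs F) = fv F - set vs"
  by (induction vs) auto
lemma fv_conjs[simp]: "fv (conjs Fs) = (\<Union>F\<in>set Fs. fv F)"
  by (induction Fs) (auto simp: Top_def)
lemma fv_Top[simp]: "fv Top = {}" by (simp add: Top_def)
lemma fv_Neg[simp]: "fv (Neg F) = fv F" by (simp add: Neg_def)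
lemma fv_Iff[simp]: "fv (Iff F G) = fv F \<union> fv G" by (auto simp: Iff_def)

lemma bvars_alls[simp]: "bvars (alls vs F) = set vs \<union> bvars F"
  by (induction vs) auto
lemma bvars_exs[simp]: "bvars (exs vs F) = set vs \<union> bvars F"
  by (induction vs) auto

lemma subst_alls: "v \<notin> set vs \<Longrightarrow> subst v t (alls vs F) = alls vs (subst v t F)"
  by (induction vs) auto
lemma subst_exs: "v \<notin> set vs \<Longrightarrow> subst v t (exs vs F) = exs vs (subst v t F)"
  by (induction vs) auto

lemma fsubst_exs: "(\<forall>v\<in>set vs. s v = Var v) \<Longrightarrow> fsubst s (exs vs F) = exs vs (fsubst s F)"
  by (induction vs) (auto simp: fun_upd_idem)

lemma fsubst_Top[simp]: "fsubst s Top = Top" by (simp add: Top_def)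
lemma fsubst_Neg[simp]: "fsubst s (Neg F) = Neg (fsubst s F)" by (simp add: Neg_def)
lemma fsubst_Iff[simp]: "fsubst s (Iff F G) = Iff (fsubst s F) (fsubst s G)" by (simp add: Iff_def)
lemma fsubst_conjs[simp]: "fsubst s (conjs Fs) = conjs (map (fsubst s) Fs)"
  by (induction Fs) auto
lemma fsubst_lexless[simp]: "fsubst s (lexless xs us) = lexless (map (tsubst s) xs) (map (tsubst s) us)"
  by (induction xs us rule: lexless.induct) auto
lemma fsubst_tupeq: "fsubst s (tupeq xs ys) = conjs (map2 (\<lambda>a b. Cmp Eq (s a) (s b)) xs ys)"
  by (auto simp: tupeq_def intro!: arg_cong[where f=conjs] map_cong)

lemma fv_lexless: "fv (lexless xs us) \<subseteq> \<Union>(tvars ` set xs) \<union> \<Union>(tvars ` set us)"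
  by (induction xs us rule: lexless.induct) auto

lemma itrm_gtrm: "itrm num t \<Longrightarrow> gtrm num t"
  by (cases t) (auto simp: gtrm_def)

lemma itrm_tsubst: "itrm num t \<Longrightarrow> (\<forall>v. sortok num v (s v)) \<Longrightarrow> itrm num (tsubst s t)"
  by (induction t) (auto simp: sortok_def split: if_splits)

lemma gtrm_tsubst: "gtrm num t \<Longrightarrow> (\<forall>v. sortok num v (s v)) \<Longrightarrow> gtrm num (tsubst s t)"
proof -
  assume g: "gtrm num t" and s: "\<forall>v. sortok num v (s v)"
  consider (V) v where "t = Var v" | (P) p where "t = Pre p" | (I) "itrm num t"
    using g by (cases t) (auto simp: gtrm_def)
  then show ?thesis
  proof cases
    case V
    have "sortok num v (s v)" using s by blast
    then show ?thesis using V by (auto simp: sortok_def itrm_gtrm split: if_splits)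
  next
    case P then show ?thesis by (simp add: gtrm_def)
  next
    case I then show ?thesis using itrm_gtrm itrm_tsubst s by blast
  qed
qed

lemma gtrm_Var[simp]: "gtrm num (Var v)" and gtrm_Pre[simp]: "gtrm num (Pre p)"
  by (auto simp: gtrm_def)

lemma sortok_upd: "(\<forall>v. sortok num v (s v)) \<Longrightarrow> (\<forall>v. sortok num v ((s(w := Var w)) v))"
  by (auto simp: sortok_def)

lemma wf_fsubst: "wf num F \<Longrightarrow> (\<forall>v. sortok num v (s v)) \<Longrightarrow> wf num (fsubst s F)"
proof (induction F arbitrary: s)
  case (All w F) then show ?case using sortok_upd[of num s w] by auto
next
  case (Ex w F) then show ?case using sortok_upd[of num s w] by auto
qed (auto simp: gtrm_tsubst itrm_tsubst)

lemma noStart_fsubst[simp]: "noStart (fsubst s F) = noStart F"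
  by (induction F arbitrary: s) auto
lemma base_fsubst[simp]: "base (fsubst s F) = base F"
  by (induction F arbitrary: s) auto
lemma base_noStart: "base F \<Longrightarrow> noStart F"
  by (induction F) auto
lemma nopa_noStart: "nopa F \<Longrightarrow> noStart F"
  by (induction F) auto

lemma wf_alls[simp]: "wf num (alls vs F) = wf num F" by (induction vs) auto
lemma wf_exs[simp]: "wf num (exs vs F) = wf num F" by (induction vs) auto
lemma wf_conjs[simp]: "wf num (conjs Fs) = (\<forall>F\<in>set Fs. wf num F)"
  by (induction Fs) (auto simp: Top_def)
lemma base_alls[simp]: "base (alls vs F) = base F" by (induction vs) auto
lemma base_exs[simp]: "base (exs vs F) = base F" by (induction vs) auto
lemma base_conjs[simp]: "base (conjs Fs) = (\<forall>F\<in>set Fs. base F)"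
  by (induction Fs) (auto simp: Top_def)
lemma base_disjs[simp]: "base (disjs Fs) = (\<forall>F\<in>set Fs. base F)"
  by (induction Fs) auto
lemma noStart_alls[simp]: "noStart (alls vs F) = noStart F" by (induction vs) auto
lemma noStart_exs[simp]: "noStart (exs vs F) = noStart F" by (induction vs) auto
lemma noStart_conjs[simp]: "noStart (conjs Fs) = (\<forall>F\<in>set Fs. noStart F)"
  by (induction Fs) (auto simp: Top_def)
lemma wf_Top[simp]: "wf num Top" by (simp add: Top_def)
lemma base_Top[simp]: "base Top" by (simp add: Top_def)
lemma nopa_Top[simp]: "nopa Top" by (simp add: Top_def)
lemma noStart_Top[simp]: "noStart Top" by (simp add: Top_def)
lemma wf_Neg[simp]: "wf num (Neg F) = wf num F" by (simp add: Neg_def)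
lemma base_Neg[simp]: "base (Neg F) = base F" by (simp add: Neg_def)
lemma nopa_Neg[simp]: "nopa (Neg F) = nopa F" by (simp add: Neg_def)
lemma noStart_Neg[simp]: "noStart (Neg F) = noStart F" by (simp add: Neg_def)
lemma wf_Iff[simp]: "wf num (Iff F G) = (wf num F \<and> wf num G)" by (auto simp: Iff_def)
lemma noStart_Iff[simp]: "noStart (Iff F G) = (noStart F \<and> noStart G)" by (auto simp: Iff_def)
lemma base_Iff[simp]: "base (Iff F G) = (base F \<and> base G)" by (auto simp: Iff_def)
lemma nopa_conjs[simp]: "nopa (conjs Fs) = (\<forall>F\<in>set Fs. nopa F)"
  by (induction Fs) (auto simp: Top_def)

lemma lexless_props[simp]:
  "base (lexless xs us)" "noStart (lexless xs us)" "nopa (lexless xs us)"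
  by (induction xs us rule: lexless.induct) auto
lemma wf_lexless: "(\<forall>t\<in>set xs. gtrm num t) \<Longrightarrow> (\<forall>t\<in>set us. gtrm num t) \<Longrightarrow> wf num (lexless xs us)"
  by (induction xs us rule: lexless.induct) auto
lemma allvars_lexless: "length xs = length us \<Longrightarrow>
  allvars (lexless xs us) = \<Union>(tvars ` set xs) \<union> \<Union>(tvars ` set us)"
  by (induction xs us rule: list_induct2) auto

lemma tupeq_props[simp]: "base (tupeq xs ys)" "noStart (tupeq xs ys)" "wf num (tupeq xs ys)"
  by (auto simp: tupeq_def gtrm_def dest!: set_zip_leftD set_zip_rightD)

definition renaming :: "var list \<Rightarrow> var list \<Rightarrow> var \<Rightarrow> 'p trm" where
  "renaming X Y v = (case map_of (zip X Y) v of Some y \<Rightarrow> Var y | None \<Rightarrow> Var v)"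

lemma renaming_Nil[simp]: "renaming [] Y = Var" by (rule ext) (simp add: renaming_def)

lemma capture_free_renaming: "set Y \<inter> bvars F = {} \<Longrightarrow> capture_free (renaming X Y) F"
  by (auto simp: capture_free_def renaming_def split: option.splits dest!: map_of_SomeD set_zip_rightD)

lemma renameF_Cons: "renameF (x # X) (y # Y) G = subst x (Var y) (renameF X Y G)"
  by (simp add: renameF_def)

lemma renameF_fsubst:
  "length X = length Y \<Longrightarrow> distinct X \<Longrightarrow> set Y \<inter> set X = {} \<Longrightarrow> set Y \<inter> bvars G = {}
   \<Longrightarrow> renameF X Y G = fsubst (renaming X Y) G"
proof (induction X Y rule: list_induct2)
  case Nil then show ?case by (simp add: renameF_def)
next
  case (Cons x X y Y)
  have cf: "capture_free (renaming X Y) G" using Cons.prems by (intro capture_free_renaming) auto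
  have "renameF (x # X) (y # Y) G = fsubst (Var(x := Var y)) (fsubst (renaming X Y) G)"
    using Cons by (simp add: renameF_Cons subst_eq_fsubst)
  also have "\<dots> = fsubst (\<lambda>v. tsubst (Var(x := Var y)) (renaming X Y v)) G" by (rule fsubst_fsubst[OF cf])
  also have "\<dots> = fsubst (renaming (x # X) (y # Y)) G"
  proof (rule arg_cong[where f="\<lambda>s. fsubst s G"], rule ext)
    fix v
    show "tsubst (Var(x := Var y)) (renaming X Y v) = renaming (x # X) (y # Y) v"
    proof (cases "map_of (zip X Y) v")
      case None
      then show ?thesis using Cons.prems by (auto simp: renaming_def)
    next
      case (Some z)
      then have "z \<in> set Y" "v \<in> set X" by (auto dest: map_of_SomeD set_zip_rightD set_zip_leftD)
      then show ?thesis using Some Cons.prems by (auto simp: renaming_def)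
    qed
  qed
  finally show ?case .
qed

lemma renaming_map: "distinct X \<Longrightarrow> length X = length Y \<Longrightarrow> map (renaming X Y) X = map Var Y"
  by (rule nth_equalityI) (auto simp: renaming_def map_of_zip_nth)

lemma renaming_out: "v \<notin> set X \<Longrightarrow> renaming X Y v = Var v"
  by (auto simp: renaming_def split: option.splits dest!: map_of_SomeD set_zip_leftD)

lemma renaming_sortok: "\<forall>y\<in>set Y. isG y \<Longrightarrow> \<forall>x\<in>set X. isG x \<Longrightarrow> sortok num v (renaming X Y v)"
proof (cases "map_of (zip X Y) v")
  case (Some y)
  assume "\<forall>y\<in>set Y. isG y" "\<forall>x\<in>set X. isG x"
  moreover have "y \<in> set Y" "v \<in> set X" using Some by (auto dest: map_of_SomeD set_zip_rightD set_zip_leftD)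
  ultimately show ?thesis using Some by (auto simp: renaming_def sortok_def)
qed (auto simp: renaming_def sortok_def)

lemma fv_renaming: fixes G :: "'p form" shows "fv (fsubst (renaming X Y) G) \<subseteq> fv G \<union> set Y"
proof
  fix x assume x: "x \<in> fv (fsubst (renaming X Y) G)"
  have "x \<in> (\<Union>v\<in>fv G. tvars (renaming X Y v :: 'p trm))" using subsetD[OF fv_fsubst[of "renaming X Y" G] x] .
  then obtain v where v: "v \<in> fv G" "x \<in> tvars (renaming X Y v :: 'p trm)" by (rule UN_E)
  show "x \<in> fv G \<union> set Y"
  proof (cases "map_of (zip X Y) v")
    case None
    then have "renaming X Y v = (Var v :: 'p trm)" by (simp add: renaming_def)
    then have "x = v" using v(2) by simp
    then show ?thesis using v(1) by simp
  next
    case (Some y)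
    then have "renaming X Y v = (Var y :: 'p trm)" by (simp add: renaming_def)
    then have "x = y" using v(2) by simp
    moreover have "y \<in> set Y" using Some by (auto dest: map_of_SomeD set_zip_rightD)
    ultimately show ?thesis by simp
  qed
qed

lemma finite_tvars[simp]: "finite (tvars t)" by (induction t) auto
lemma finite_allvars[simp]: "finite (allvars F)" by (induction F) auto
lemma bvars_allvars: "bvars F \<subseteq> allvars F" by (induction F) auto

lemma freshb_gt: "v \<in> allvars G \<union> set XV \<Longrightarrow> vidx v < freshb G XV"
proof -
  assume v: "v \<in> allvars G \<union> set XV"
  have fin: "finite (insert 0 (vidx ` (allvars G \<union> set XV)))" by simp
  have "vidx v \<le> Max (insert 0 (vidx ` (allvars G \<union> set XV)))"
    using v by (intro Max_ge[OF fin]) auto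
  then show ?thesis by (simp add: freshb_def)
qed

lemma base_subst[simp]: "base (subst v t F) = base F" by (simp add: subst_eq_fsubst)
lemma noStart_subst[simp]: "noStart (subst v t F) = noStart F" by (simp add: subst_eq_fsubst)

lemma base_foldr_subst: "base (foldr (\<lambda>(x, y) H. subst x (Var y) H) ps G) = base G"
  by (induction ps) (auto simp: case_prod_beta)
lemma base_renameF[simp]: "base (renameF X Y G) = base G"
  unfolding renameF_def by (rule base_foldr_subst)

lemma wf_foldr_subst:
  "\<forall>p\<in>set ps. isG (fst p) \<Longrightarrow> wf num F \<Longrightarrow> wf num (foldr (\<lambda>(x, y) H. subst x (Var y) H) ps F)"
  by (induction ps) (auto simp: subst_eq_fsubst sortok_def intro!: wf_fsubst)

lemma wf_renameF: "wf num F \<Longrightarrow> \<forall>x\<in>set X. isG x \<Longrightarrow> wf num (renameF X Y F)"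
  unfolding renameF_def by (rule wf_foldr_subst) (auto dest: set_zip_leftD)

lemma base_atleastF: "base G \<Longrightarrow> base (atleastF num X G r)"
  by (auto simp: atleastF_def Let_def tupeq_def case_prod_beta)
lemma base_atmostF: "base G \<Longrightarrow> base (atmostF num X G r)"
  by (auto simp: atmostF_def Let_def tupeq_def case_prod_beta)

lemma wf_atleastF: "aggok X V G \<Longrightarrow> wf num G \<Longrightarrow> wf num (atleastF num X G r)"
proof -
  assume a: "aggok X V G" and w: "wf num G"
  have g: "\<forall>x\<in>set X. isG x" using a by (simp add: aggok_def)
  have h: "\<And>Y. wf num (renameF X Y G)" using wf_renameF[OF w g] .
  show ?thesis unfolding atleastF_def Let_def using h by (auto split: prod.splits)
qed

section \<open>Eliminating Start\<close>

definition above_vars :: "var list \<Rightarrow> var list \<Rightarrow> 'p form \<Rightarrow> var list" where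
  "above_vars X V G = map (\<lambda>j. GV (freshb G (X @ V) + j)) [0..<length X]"

definition above_body :: "var list \<Rightarrow> var list \<Rightarrow> 'p form \<Rightarrow> 'p form" where
  "above_body X V G = And (Neg (lexless (map Var (above_vars X V G @ V)) (map Var (X @ V))))
                   (And (renameF X (above_vars X V G) G) G)"

text \<open>With U = above_vars X V G fresh, above_body X V G says that (U, V) is not
  lexicographically below (X, V) and that G holds at (U, V) and at (X, V); counting the U
  that satisfy it expresses Start.\<close>

fun elim_start :: "'p form \<Rightarrow> 'p form" where
  "elim_start (Start X V G xs vs n) = Atleast (above_vars X V G) (X @ V) (above_body X V G) (xs @ vs) n"
| "elim_start (And F G) = And (elim_start F) (elim_start G)"
| "elim_start (Or F G) = Or (elim_start F) (elim_start G)"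
| "elim_start (Imp F G) = Imp (elim_start F) (elim_start G)"
| "elim_start (All v F) = All v (elim_start F)"
| "elim_start (Ex v F) = Ex v (elim_start F)"
| "elim_start Bot = Bot"
| "elim_start (Pred p ts) = Pred p ts"
| "elim_start (Cmp c a b) = Cmp c a b"
| "elim_start (Atleast X V G ts r) = Atleast X V G ts r"
| "elim_start (Atmost X V G ts r) = Atmost X V G ts r"

lemma elim_start_noStart: "noStart F \<Longrightarrow> elim_start F = F" by (induction F) auto
lemma noStart_elim_start[simp]: "noStart (elim_start F)" by (induction F) auto
lemma fv_elim_start[simp]: "fv (elim_start F) = fv F" by (induction F) auto
lemma elim_start_subst[simp]: "elim_start (subst v t F) = subst v t (elim_start F)" by (induction F) auto
lemma freefor_elim_start[simp]: "freefor t v (elim_start F) = freefor t v F" by (induction F) auto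
lemma elim_start_Neg[simp]: "elim_start (Neg F) = Neg (elim_start F)" by (simp add: Neg_def)
lemma elim_start_Iff[simp]: "elim_start (Iff F G) = Iff (elim_start F) (elim_start G)" by (simp add: Iff_def)
lemma elim_start_alls[simp]: "elim_start (alls vs F) = alls vs (elim_start F)" by (induction vs) auto
lemma elim_start_exs[simp]: "elim_start (exs vs F) = exs vs (elim_start F)" by (induction vs) auto

lemma above_vars_props:
  assumes "aggok X V G"
  shows "length (above_vars X V G) = length X" "distinct (above_vars X V G @ X @ V)"
    "\<forall>u\<in>set (above_vars X V G). isG u" "set (above_vars X V G) \<inter> allvars G = {}"
proof -
  let ?b = "freshb G (X @ V)"
  show "length (above_vars X V G) = length X" by (simp add: above_vars_def)
  have fr: "\<And>u. u \<in> set (above_vars X V G) \<Longrightarrow> ?b \<le> vidx u" by (auto simp: above_vars_def)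
  have lt: "\<And>v. v \<in> allvars G \<union> set (X @ V) \<Longrightarrow> vidx v < ?b" by (rule freshb_gt)
  have d1: "distinct (above_vars X V G)" by (auto simp: above_vars_def distinct_map inj_on_def)
  have d2: "distinct (X @ V)" using assms by (simp add: aggok_def)
  have dis: "set (above_vars X V G) \<inter> set (X @ V) = {}"
  proof (rule ccontr)
    assume "set (above_vars X V G) \<inter> set (X @ V) \<noteq> {}"
    then obtain u where "u \<in> set (above_vars X V G)" "u \<in> set (X @ V)" by blast
    then show False using fr lt by fastforce
  qed
  show "distinct (above_vars X V G @ X @ V)" using d1 d2 dis by auto
  show "\<forall>u\<in>set (above_vars X V G). isG u" by (auto simp: above_vars_def)
  show "set (above_vars X V G) \<inter> allvars G = {}"
  proof (rule ccontr)
    assume "set (above_vars X V G) \<inter> allvars G \<noteq> {}"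
    then obtain u where "u \<in> set (above_vars X V G)" "u \<in> allvars G" by blast
    then show False using fr lt by fastforce
  qed
qed

lemma renameF_above_vars:
  assumes "aggok X V G"
  shows "renameF X (above_vars X V G) G = fsubst (renaming X (above_vars X V G)) G"
proof (rule renameF_fsubst)
  note u = above_vars_props[OF assms]
  show "length X = length (above_vars X V G)" using u by simp
  show "distinct X" using assms by (simp add: aggok_def)
  show "set (above_vars X V G) \<inter> set X = {}" using u(2) by auto
  show "set (above_vars X V G) \<inter> bvars G = {}" using u(4) bvars_allvars by blast
qed

lemma aggwf_above_body:
  assumes "aggwf num X V G"
  shows "aggwf num (above_vars X V G) (X @ V) (above_body X V G)"
proof -
  have ag: "aggok X V G" and wG: "wf num G" using assms by (auto simp: aggwf_def)
  note u = above_vars_props[OF ag]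
  have XVG: "\<forall>v\<in>set (X @ V). isG v" "base G" "fv G \<subseteq> set X \<union> set V" using ag by (auto simp: aggok_def)
  have r: "renameF X (above_vars X V G) G = fsubst (renaming X (above_vars X V G)) G" by (rule renameF_above_vars[OF ag])
  have fvK: "fv (above_body X V G) \<subseteq> set (above_vars X V G) \<union> set (X @ V)"
  proof -
    have "fv (lexless (map Var (above_vars X V G @ V)) (map Var (X @ V)) :: 'a form)
        \<subseteq> set (above_vars X V G) \<union> set (X @ V)"
      using fv_lexless[of "map Var (above_vars X V G @ V)" "map Var (X @ V)"] by auto
    moreover have "fv (fsubst (renaming X (above_vars X V G)) G) \<subseteq> set (above_vars X V G) \<union> set (X @ V)"
      using fv_renaming[of X "above_vars X V G" G] XVG(3) by auto
    ultimately show ?thesis using XVG(3) by (auto simp: above_body_def r)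
  qed
  have wK: "wf num (above_body X V G)"
    unfolding above_body_def r using XVG u wG
    by (auto intro!: wf_lexless wf_fsubst renaming_sortok)
  have bK: "base (above_body X V G)" unfolding above_body_def using XVG by simp
  show ?thesis unfolding aggwf_def aggok_def using u XVG fvK wK bK by auto
qed

lemma wf_elim_start: "wf num F \<Longrightarrow> wf num (elim_start F)"
proof (induction F)
  case (Start X V G xs vs n)
  have "aggwf num X V G" using Start.prems by (simp add: aggwf_def)
  then have "aggwf num (above_vars X V G) (X @ V) (above_body X V G)" by (rule aggwf_above_body)
  then show ?case using Start.prems by (auto simp: aggwf_def itrm_gtrm)
qed auto

lemma sig1_elim_start: "sig2 num F \<Longrightarrow> sig1 num (elim_start F)"
  by (simp add: sig1_def sig2_def wf_elim_start)

lemma ok_elim_start: "ok (sig2 num) \<Gamma> F \<Longrightarrow> ok (sig1 num) (elim_start ` \<Gamma>) (elim_start F)"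
  by (auto simp: ok_def sig1_elim_start)

lemma elim_start_HTax: "F \<in> HTax num \<Longrightarrow> elim_start F \<in> HTax num"
proof -
  assume "F \<in> HTax num"
  then consider (a) A B where "F = Or A (Or (Imp A B) (Neg B))"
    | (b) n A where "F = Ex (GV n) (Imp A (All (GV n) A))"
    | (c) "F \<in> Std num" | (d) "F \<in> Defs num"
    unfolding HTax_def by blast
  then show ?thesis
  proof cases
    case a then show ?thesis by (auto simp: HTax_def)
  next
    case b then show ?thesis by (auto simp: HTax_def)
  next
    case c
    then have "nopa F" by (simp add: Std_def)
    then have "elim_start F = F" by (intro elim_start_noStart nopa_noStart)
    then show ?thesis using c by (simp add: HTax_def)
  next
    case d
    have h: "\<And>X G r. base G \<Longrightarrow> noStart (atleastF num X G r) \<and> noStart (atmostF num X G r)"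
      using base_noStart base_atleastF base_atmostF by blast
    have "noStart F" using d h by (auto simp: Defs_def aggwf_def aggok_def)
    then have "elim_start F = F" by (rule elim_start_noStart)
    then show ?thesis using d by (simp add: HTax_def)
  qed
qed

abbreviation HT1 :: "(int \<Rightarrow> 'p::linorder) \<Rightarrow> 'p form set \<Rightarrow> 'p form \<Rightarrow> bool" where
  "HT1 num \<Gamma> F \<equiv> deriv num (sig1 num) (HTax num) \<Gamma> F"

lemma deriv_elim_start:
  assumes "deriv num (sig2 num) (HTax num \<union> A) \<Gamma> F"
    and A: "\<And>F. F \<in> A \<Longrightarrow> HT1 num {} (elim_start F)"
  shows "HT1 num (elim_start ` \<Gamma>) (elim_start F)"
  using assms(1)
proof (induction rule: deriv.induct)
  case (ax F \<Gamma>)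
  then show ?case
    using A[of F] elim_start_HTax[of F] ok_elim_start[OF ax(2)] by (auto intro: deriv.ax deriv.weak)
next
  case (hyp F \<Gamma>) show ?case by (rule deriv.hyp) (use hyp in \<open>auto dest: ok_elim_start\<close>)
next
  case (weak \<Gamma> F \<Delta>) show ?case by (rule deriv.weak[OF weak.IH]) (use weak in \<open>auto dest: ok_elim_start\<close>)
next
  case (botE \<Gamma> F) show ?case by (rule deriv.botE) (use botE in \<open>auto dest: ok_elim_start\<close>)
next
  case (andI \<Gamma> F G) show ?case by (simp, rule deriv.andI) (use andI in \<open>auto dest: ok_elim_start\<close>)
next
  case (andE1 \<Gamma> F G) show ?case
    by (rule deriv.andE1[where G = "elim_start G"]) (use andE1 in \<open>auto dest: ok_elim_start\<close>)
next
  case (andE2 \<Gamma> F G) show ?case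
    by (rule deriv.andE2[where F = "elim_start F"]) (use andE2 in \<open>auto dest: ok_elim_start\<close>)
next
  case (orI1 \<Gamma> F G) show ?case by (simp, rule deriv.orI1) (use orI1 in \<open>auto dest: ok_elim_start\<close>)
next
  case (orI2 \<Gamma> G F) show ?case by (simp, rule deriv.orI2) (use orI2 in \<open>auto dest: ok_elim_start\<close>)
next
  case (orE \<Gamma> F G H) show ?case
    by (rule deriv.orE[where F = "elim_start F" and G = "elim_start G"])
      (use orE in \<open>auto dest: ok_elim_start\<close>)
next
  case (impI F \<Gamma> G) show ?case by (simp, rule deriv.impI) (use impI in \<open>auto dest: ok_elim_start\<close>)
next
  case (impE \<Gamma> F G) show ?case
    by (rule deriv.impE[where F = "elim_start F"]) (use impE in \<open>auto dest: ok_elim_start\<close>)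
next
  case (allI \<Gamma> F v) show ?case by (simp, rule deriv.allI) (use allI in \<open>auto dest: ok_elim_start\<close>)
next
  case (allE \<Gamma> v F t) show ?case by (simp, rule deriv.allE) (use allE in \<open>auto dest: ok_elim_start\<close>)
next
  case (exI \<Gamma> v t F) show ?case by (simp, rule deriv.exI) (use exI in \<open>auto dest: ok_elim_start\<close>)
next
  case (exE \<Gamma> v F G) show ?case
    by (rule deriv.exE[where F = "elim_start F" and v = v]) (use exE in \<open>auto dest: ok_elim_start\<close>)
next
  case (eqRefl \<Gamma> t) show ?case by (simp, rule deriv.eqRefl) (use eqRefl in \<open>auto dest: ok_elim_start\<close>)
next
  case (eqSubst \<Gamma> s t v F) show ?case
    by (simp, rule deriv.eqSubst) (use eqSubst in \<open>auto dest: ok_elim_start\<close>)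
next
  case (omegaG \<Gamma> n F) show ?case by (simp, rule deriv.omegaG) (use omegaG in \<open>auto dest: ok_elim_start\<close>)
next
  case (omegaI \<Gamma> n F) show ?case by (simp, rule deriv.omegaI) (use omegaI in \<open>auto dest: ok_elim_start\<close>)
qed


section \<open>Derived rules of HT1\<close>

definition sig1_ctx :: "(int \<Rightarrow> 'p) \<Rightarrow> 'p form set \<Rightarrow> bool" where
  "sig1_ctx num \<Gamma> = (finite \<Gamma> \<and> (\<forall>G\<in>\<Gamma>. sig1 num G))"

lemma deriv_ok: "deriv num L A \<Gamma> F \<Longrightarrow> ok L \<Gamma> F"
  by (induction rule: deriv.induct) auto

lemma HT1_sig1_ctx: "HT1 num \<Gamma> F \<Longrightarrow> sig1_ctx num \<Gamma>"
  using deriv_ok[of num "sig1 num" "HTax num" \<Gamma> F] by (simp add: ok_def sig1_ctx_def)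
lemma HT1_sig1: "HT1 num \<Gamma> F \<Longrightarrow> sig1 num F"
  using deriv_ok[of num "sig1 num" "HTax num" \<Gamma> F] by (simp add: ok_def)

lemma ok_sig1I: "sig1_ctx num \<Gamma> \<Longrightarrow> sig1 num F \<Longrightarrow> ok (sig1 num) \<Gamma> F"
  by (simp add: ok_def sig1_ctx_def)

lemma sig1_simps[simp]:
  "sig1 num (And A B) = (sig1 num A \<and> sig1 num B)"
  "sig1 num (Or A B) = (sig1 num A \<and> sig1 num B)"
  "sig1 num (Imp A B) = (sig1 num A \<and> sig1 num B)"
  "sig1 num (All v A) = sig1 num A"
  "sig1 num (Ex v A) = sig1 num A"
  "sig1 num Bot"
  "sig1 num Top"
  "sig1 num (Neg A) = sig1 num A"
  "sig1 num (Iff A B) = (sig1 num A \<and> sig1 num B)"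
  "sig1 num (alls vs A) = sig1 num A"
  "sig1 num (exs vs A) = sig1 num A"
  "sig1 num (conjs Fs) = (\<forall>F\<in>set Fs. sig1 num F)"
  by (auto simp: sig1_def)

lemma sig1_Cmp_Pre[simp]: "sig1 num (Cmp c (Pre x) (Pre y))"
  by (simp add: sig1_def)

lemma sig1_ctx_insert[simp]: "sig1_ctx num (insert A \<Gamma>) = (sig1 num A \<and> sig1_ctx num \<Gamma>)"
  by (auto simp: sig1_ctx_def)
lemma sig1_ctx_empty[simp]: "sig1_ctx num {}" by (simp add: sig1_ctx_def)

lemma HT1_hyp: "F \<in> \<Gamma> \<Longrightarrow> sig1_ctx num \<Gamma> \<Longrightarrow> HT1 num \<Gamma> F"
  by (rule deriv.hyp) (auto simp: ok_def sig1_ctx_def)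

lemma HT1_weaken: "HT1 num \<Gamma> F \<Longrightarrow> \<Gamma> \<subseteq> \<Delta> \<Longrightarrow> sig1_ctx num \<Delta> \<Longrightarrow> HT1 num \<Delta> F"
  by (rule deriv.weak) (auto intro: ok_sig1I HT1_sig1)

lemma HT1_impI: "HT1 num (insert A \<Gamma>) B \<Longrightarrow> sig1_ctx num \<Gamma> \<Longrightarrow> HT1 num \<Gamma> (Imp A B)"
proof -
  assume d: "HT1 num (insert A \<Gamma>) B" and o: "sig1_ctx num \<Gamma>"
  have "sig1 num A" using HT1_sig1_ctx[OF d] by simp
  moreover have "sig1 num B" using HT1_sig1[OF d] .
  ultimately show ?thesis using d o by (intro deriv.impI ok_sig1I) auto
qed

lemma HT1_mp: "HT1 num \<Gamma> A \<Longrightarrow> HT1 num \<Gamma> (Imp A B) \<Longrightarrow> HT1 num \<Gamma> B"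
proof -
  assume a: "HT1 num \<Gamma> A" and b: "HT1 num \<Gamma> (Imp A B)"
  have "sig1 num B" using HT1_sig1[OF b] by simp
  then show ?thesis using a b HT1_sig1_ctx[OF a] by (intro deriv.impE[OF a b] ok_sig1I)
qed

lemma HT1_conjI: "HT1 num \<Gamma> A \<Longrightarrow> HT1 num \<Gamma> B \<Longrightarrow> HT1 num \<Gamma> (And A B)"
  by (rule deriv.andI) (auto intro!: ok_sig1I dest: HT1_sig1_ctx HT1_sig1)
lemma HT1_conjunct1: "HT1 num \<Gamma> (And A B) \<Longrightarrow> HT1 num \<Gamma> A"
proof -
  assume a: "HT1 num \<Gamma> (And A B)"
  have "sig1 num A" using HT1_sig1[OF a] by simp
  then show ?thesis using a by (intro deriv.andE1[OF a] ok_sig1I HT1_sig1_ctx)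
qed
lemma HT1_conjunct2: "HT1 num \<Gamma> (And A B) \<Longrightarrow> HT1 num \<Gamma> B"
proof -
  assume a: "HT1 num \<Gamma> (And A B)"
  have "sig1 num B" using HT1_sig1[OF a] by simp
  then show ?thesis using a by (intro deriv.andE2[OF a] ok_sig1I HT1_sig1_ctx)
qed
lemma HT1_botE: "HT1 num \<Gamma> Bot \<Longrightarrow> sig1 num F \<Longrightarrow> HT1 num \<Gamma> F"
  by (rule deriv.botE) (auto intro: ok_sig1I dest: HT1_sig1_ctx)

lemma HT1_Top: "sig1_ctx num \<Gamma> \<Longrightarrow> HT1 num \<Gamma> Top"
  unfolding Top_def by (intro HT1_impI HT1_hyp) auto

lemma HT1_iffI: "HT1 num \<Gamma> (Imp A B) \<Longrightarrow> HT1 num \<Gamma> (Imp B A) \<Longrightarrow> HT1 num \<Gamma> (Iff A B)"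
  unfolding Iff_def by (rule HT1_conjI)
lemma HT1_iffD1: "HT1 num \<Gamma> (Iff A B) \<Longrightarrow> HT1 num \<Gamma> A \<Longrightarrow> HT1 num \<Gamma> B"
  unfolding Iff_def by (meson HT1_conjunct1 HT1_mp)
lemma HT1_iffD2: "HT1 num \<Gamma> (Iff A B) \<Longrightarrow> HT1 num \<Gamma> B \<Longrightarrow> HT1 num \<Gamma> A"
  unfolding Iff_def by (meson HT1_conjunct2 HT1_mp)

lemma HT1_conjsI: "sig1_ctx num \<Gamma> \<Longrightarrow> (\<And>F. F \<in> set Fs \<Longrightarrow> HT1 num \<Gamma> F) \<Longrightarrow> HT1 num \<Gamma> (conjs Fs)"
proof (induction Fs)
  case Nil then show ?case by (simp add: HT1_Top)
next
  case (Cons F Fs) then show ?case by (simp add: HT1_conjI)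
qed

lemma HT1_conjsD: "HT1 num \<Gamma> (conjs Fs) \<Longrightarrow> F \<in> set Fs \<Longrightarrow> HT1 num \<Gamma> F"
proof (induction Fs)
  case Nil then show ?case by simp
next
  case (Cons G Fs)
  have a: "HT1 num \<Gamma> (And G (conjs Fs))" using Cons.prems(1) by simp
  show ?case
  proof (cases "F = G")
    case True then show ?thesis using HT1_conjunct1[OF a] by simp
  next
    case False then show ?thesis using Cons.IH[OF HT1_conjunct2[OF a]] Cons.prems(2) by simp
  qed
qed

lemma toint_num: "strict_mono num \<Longrightarrow> toint num (num k) = k"
  unfolding toint_def by (rule the_equality) (auto dest: strict_mono_eq)

lemma tval_cong: "(\<And>v. v \<in> tvars t \<Longrightarrow> e v = e' v) \<Longrightarrow> tval num e t = tval num e' t"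
  by (induction t) auto

lemma sat_cong: "(\<And>v. v \<in> fv F \<Longrightarrow> e v = e' v) \<Longrightarrow> sat num e F = sat num e' F"
proof (induction F arbitrary: e e')
  case (All w F)
  have "\<And>p. sat num (e(w := p)) F = sat num (e'(w := p)) F" by (rule All.IH) (use All.prems in auto)
  then show ?case by simp
next
  case (Ex w F)
  have "\<And>p. sat num (e(w := p)) F = sat num (e'(w := p)) F" by (rule Ex.IH) (use Ex.prems in auto)
  then show ?case by simp
next
  case (And F1 F2) show ?case by (simp, intro conj_cong And.IH) (use And.prems in auto)
next
  case (Or F1 F2) show ?case by (simp, intro disj_cong Or.IH) (use Or.prems in auto)
next
  case (Imp F1 F2) show ?case by (simp, intro imp_cong Imp.IH) (use Imp.prems in auto)
qed (auto intro!: arg_cong2[where f = "cmpv _"] tval_cong)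

lemma sat_closed: "fv F = {} \<Longrightarrow> sat num e F = sat num e' F"
  by (rule sat_cong) auto

text \<open>Std decides every closed formula built from comparisons; this is how all ground
  facts about concrete tuples are derived below.\<close>

lemma HT1_Std: "F \<in> Std num \<Longrightarrow> sig1_ctx num \<Gamma> \<Longrightarrow> HT1 num \<Gamma> F"
  by (rule deriv.ax) (auto simp: HTax_def Std_def ok_def sig1_ctx_def sig1_def nopa_noStart)

lemma HT1_true: "sig1_ctx num \<Gamma> \<Longrightarrow> wf num F \<Longrightarrow> nopa F \<Longrightarrow> fv F = {} \<Longrightarrow> sat num e F \<Longrightarrow> HT1 num \<Gamma> F"
  by (rule HT1_Std) (auto simp: Std_def intro: sat_closed[THEN iffD1])

lemma HT1_false: "HT1 num \<Gamma> F \<Longrightarrow> nopa F \<Longrightarrow> fv F = {} \<Longrightarrow> \<not> sat num e F \<Longrightarrow> sig1 num G \<Longrightarrow> HT1 num \<Gamma> G"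
proof -
  assume d: "HT1 num \<Gamma> F" and n: "nopa F" and f: "fv F = {}" and s: "\<not> sat num e F" and g: "sig1 num G"
  have w: "wf num F" using HT1_sig1[OF d] by (simp add: sig1_def)
  have "\<forall>e'. sat num e' (Neg F)" using s sat_closed[OF f, of num e] by (auto simp: Neg_def)
  then have "HT1 num \<Gamma> (Neg F)" using w n f HT1_sig1_ctx[OF d] by (intro HT1_Std) (auto simp: Std_def)
  then have "HT1 num \<Gamma> Bot" using d unfolding Neg_def by (rule HT1_mp[rotated])
  then show ?thesis using g by (rule HT1_botE)
qed

definition ground_on :: "var set \<Rightarrow> (var \<Rightarrow> 'p) \<Rightarrow> var \<Rightarrow> 'p trm" where
  "ground_on S c v = (if v \<in> S then Pre (c v) else Var v)"

definition sortok_on :: "(int \<Rightarrow> 'p) \<Rightarrow> var set \<Rightarrow> (var \<Rightarrow> 'p) \<Rightarrow> bool" where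
  "sortok_on num S c = (\<forall>v\<in>S. \<not> isG v \<longrightarrow> (\<exists>k. c v = num k))"

lemma capture_free_ground_on[simp]: "capture_free (ground_on S c) F"
  by (auto simp: capture_free_def ground_on_def)

lemma capture_free_upd_Pre[simp]: "capture_free (Var(v := Pre p)) F"
  by (auto simp: capture_free_def)

lemma sortok_ground_on: "sortok_on num S c \<Longrightarrow> \<forall>v. sortok num v (ground_on S c v)"
  by (auto simp: sortok_on_def ground_on_def sortok_def)

lemma sig1_fsubst_ground_on: "sig1 num F \<Longrightarrow> sortok_on num S c \<Longrightarrow> sig1 num (fsubst (ground_on S c) F)"
  by (auto simp: sig1_def intro!: wf_fsubst sortok_ground_on)

lemma map_ground_on_subset: "set xs \<subseteq> S \<Longrightarrow> map (ground_on S c) xs = map Pre (map c xs)"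
  by (induction xs) (auto simp: ground_on_def)

definition tuple_asg :: "var list \<Rightarrow> 'p list \<Rightarrow> var \<Rightarrow> 'p" where
  "tuple_asg vs ts v = the (map_of (zip vs ts) v)"

lemma map_tuple_asg: "distinct vs \<Longrightarrow> length vs = length ts \<Longrightarrow> map (tuple_asg vs ts) vs = ts"
  by (rule nth_equalityI) (auto simp: tuple_asg_def map_of_zip_nth)

lemma map_ground_on_tuple_asg:
  "distinct vs \<Longrightarrow> length vs = length ts \<Longrightarrow> map (ground_on (set vs) (tuple_asg vs ts)) vs = map Pre ts"
  by (simp add: map_ground_on_subset map_tuple_asg)

lemma sortok_Pre: "isG v \<or> (\<exists>k. p = num k) \<Longrightarrow> sortok num v (Pre p)"
  by (auto simp: sortok_def)

lemma sig1_subst_Pre: "sig1 num F \<Longrightarrow> isG v \<or> (\<exists>k. p = num k) \<Longrightarrow> sig1 num (subst v (Pre p) F)"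
  unfolding subst_eq_fsubst sig1_def
  by (auto intro!: wf_fsubst simp: sortok_def)

lemma ground_on_step: "v \<notin> set vs \<Longrightarrow>
  fsubst (ground_on (set vs) c) (subst v (Pre p) F) = fsubst (ground_on (set (v # vs)) (c(v := p))) F"
proof -
  assume v: "v \<notin> set vs"
  have "fsubst (ground_on (set vs) c) (subst v (Pre p) F) = fsubst (\<lambda>u. tsubst (ground_on (set vs) c) ((Var(v := Pre p)) u)) F"
    by (simp add: subst_eq_fsubst fsubst_fsubst)
  also have "(\<lambda>u. tsubst (ground_on (set vs) c) ((Var(v := Pre p)) u)) = ground_on (set (v # vs)) (c(v := p))"
    using v by (auto simp: ground_on_def)
  finally show ?thesis .
qed

lemma ground_on_step_self: "v \<notin> set vs \<Longrightarrow>
  fsubst (ground_on (set vs) c) (subst v (Pre (c v)) F) = fsubst (ground_on (set (v # vs)) c) F"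
  using ground_on_step[of v vs c "c v" F] by simp

lemma HT1_allsI_ground:
  "distinct vs \<Longrightarrow> sig1_ctx num \<Gamma> \<Longrightarrow> sig1 num \<Phi> \<Longrightarrow>
   (\<And>c. sortok_on num (set vs) c \<Longrightarrow> HT1 num \<Gamma> (fsubst (ground_on (set vs) c) \<Phi>)) \<Longrightarrow> HT1 num \<Gamma> (alls vs \<Phi>)"
proof (induction vs arbitrary: \<Phi>)
  case Nil
  have "HT1 num \<Gamma> (fsubst (ground_on (set []) (\<lambda>_. undefined)) \<Phi>)" by (rule Nil.prems(4)) (simp add: sortok_on_def)
  moreover have "ground_on (set []) (\<lambda>_. undefined) = (Var :: var \<Rightarrow> 'a trm)" by (auto simp: ground_on_def)
  ultimately show ?case by simp
next
  case (Cons v vs)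
  have v: "v \<notin> set vs" "distinct vs" using Cons.prems(1) by auto
  have sub: "\<And>p. isG v \<or> (\<exists>k. p = num k) \<Longrightarrow> HT1 num \<Gamma> (subst v (Pre p) (alls vs \<Phi>))"
  proof -
    fix p assume p: "isG v \<or> (\<exists>k. p = num k)"
    have "HT1 num \<Gamma> (alls vs (subst v (Pre p) \<Phi>))"
    proof (rule Cons.IH[OF v(2) Cons.prems(2)])
      show "sig1 num (subst v (Pre p) \<Phi>)" using Cons.prems(3) p by (rule sig1_subst_Pre)
      fix c assume c: "sortok_on num (set vs) c"
      have "sortok_on num (set (v # vs)) (c(v := p))" using c p by (auto simp: sortok_on_def)
      then have "HT1 num \<Gamma> (fsubst (ground_on (set (v # vs)) (c(v := p))) \<Phi>)" by (rule Cons.prems(4))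
      then show "HT1 num \<Gamma> (fsubst (ground_on (set vs) c) (subst v (Pre p) \<Phi>))" unfolding ground_on_step[OF v(1)] .
    qed
    then show "HT1 num \<Gamma> (subst v (Pre p) (alls vs \<Phi>))" using v(1) by (simp add: subst_alls)
  qed
  have o: "ok (sig1 num) \<Gamma> (All v (alls vs \<Phi>))" using Cons.prems(2,3) by (intro ok_sig1I) auto
  show ?case
  proof (cases v)
    case (GV n)
    have "HT1 num \<Gamma> (All (GV n) (alls vs \<Phi>))" using o GV sub by (intro deriv.omegaG) auto
    then show ?thesis using GV by simp
  next
    case (IV n)
    have "HT1 num \<Gamma> (All (IV n) (alls vs \<Phi>))" using o IV sub by (intro deriv.omegaI) auto
    then show ?thesis using IV by simp
  qed
qed

lemma HT1_allsE_ground: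
  "HT1 num \<Gamma> (alls vs \<Phi>) \<Longrightarrow> distinct vs \<Longrightarrow> sortok_on num (set vs) c \<Longrightarrow> HT1 num \<Gamma> (fsubst (ground_on (set vs) c) \<Phi>)"
proof (induction vs arbitrary: \<Phi>)
  case Nil
  have "ground_on (set []) c = (Var :: var \<Rightarrow> 'a trm)" by (auto simp: ground_on_def)
  then show ?case using Nil by simp
next
  case (Cons v vs)
  have v: "v \<notin> set vs" "distinct vs" using Cons.prems(2) by auto
  have a: "HT1 num \<Gamma> (All v (alls vs \<Phi>))" using Cons.prems(1) by simp
  have s: "sortok num v (Pre (c v))" using Cons.prems(3) by (intro sortok_Pre) (auto simp: sortok_on_def)
  have sp: "isG v \<or> (\<exists>k. c v = num k)" using Cons.prems(3) by (auto simp: sortok_on_def)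
  have sg: "sig1 num (subst v (Pre (c v)) (alls vs \<Phi>))"
    using HT1_sig1[OF a] sp by (intro sig1_subst_Pre) auto
  have "HT1 num \<Gamma> (subst v (Pre (c v)) (alls vs \<Phi>))"
    using a s freefor_Pre ok_sig1I[OF HT1_sig1_ctx[OF a] sg] by (rule deriv.allE)
  then have "HT1 num \<Gamma> (alls vs (subst v (Pre (c v)) \<Phi>))" using v(1) by (simp add: subst_alls)
  then have "HT1 num \<Gamma> (fsubst (ground_on (set vs) c) (subst v (Pre (c v)) \<Phi>))"
    using v(2) Cons.prems(3) by (intro Cons.IH) (auto simp: sortok_on_def)
  then show ?case unfolding ground_on_step_self[OF v(1)] .
qed

lemma HT1_exsI_ground:
  "HT1 num \<Gamma> (fsubst (ground_on (set vs) c) \<Phi>) \<Longrightarrow> distinct vs \<Longrightarrow> sortok_on num (set vs) c \<Longrightarrow> sig1 num \<Phi>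
   \<Longrightarrow> HT1 num \<Gamma> (exs vs \<Phi>)"
proof (induction vs arbitrary: \<Phi>)
  case Nil
  have "ground_on (set []) c = (Var :: var \<Rightarrow> 'a trm)" by (auto simp: ground_on_def)
  then show ?case using Nil by simp
next
  case (Cons v vs)
  have v: "v \<notin> set vs" "distinct vs" using Cons.prems(2) by auto
  have sp: "isG v \<or> (\<exists>k. c v = num k)" using Cons.prems(3) by (auto simp: sortok_on_def)
  have s: "sortok num v (Pre (c v))" using sp by (rule sortok_Pre)
  have "HT1 num \<Gamma> (exs vs (subst v (Pre (c v)) \<Phi>))"
  proof (rule Cons.IH[OF _ v(2)])
    show "HT1 num \<Gamma> (fsubst (ground_on (set vs) c) (subst v (Pre (c v)) \<Phi>))"
      unfolding ground_on_step_self[OF v(1)] by (rule Cons.prems(1))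
    show "sortok_on num (set vs) c" using Cons.prems(3) by (auto simp: sortok_on_def)
    show "sig1 num (subst v (Pre (c v)) \<Phi>)" using Cons.prems(4) sp by (rule sig1_subst_Pre)
  qed
  then have d: "HT1 num \<Gamma> (subst v (Pre (c v)) (exs vs \<Phi>))" using v(1) by (simp add: subst_exs)
  have o: "ok (sig1 num) \<Gamma> (Ex v (exs vs \<Phi>))" using HT1_sig1_ctx[OF d] Cons.prems(4) by (intro ok_sig1I) auto
  have "HT1 num \<Gamma> (Ex v (exs vs \<Phi>))" using d s freefor_Pre o by (rule deriv.exI)
  then show ?case by simp
qed

lemma HT1_exs_mp:
  "HT1 num \<Gamma> (exs vs B) \<Longrightarrow> HT1 num \<Gamma> (alls vs (Imp B C)) \<Longrightarrow> distinct vs \<Longrightarrow>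
   (\<forall>v\<in>set vs. v \<notin> \<Union>(fv ` \<Gamma>) \<and> v \<notin> fv C) \<Longrightarrow> HT1 num \<Gamma> C"
proof (induction vs arbitrary: \<Gamma>)
  case Nil
  have "HT1 num \<Gamma> B" using Nil.prems(1) by simp
  moreover have "HT1 num \<Gamma> (Imp B C)" using Nil.prems(2) by simp
  ultimately show ?case by (rule HT1_mp)
next
  case (Cons v vs)
  let ?G = "insert (exs vs B) \<Gamma>"
  have e: "HT1 num \<Gamma> (Ex v (exs vs B))" using Cons.prems(1) by simp
  have a: "HT1 num \<Gamma> (All v (alls vs (Imp B C)))" using Cons.prems(2) by simp
  have sig1_ctx: "sig1_ctx num ?G" using HT1_sig1_ctx[OF e] HT1_sig1[OF e] by simp
  have sv: "sortok num v (Var v)" by (auto simp: sortok_def)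
  have a1: "HT1 num \<Gamma> (subst v (Var v) (alls vs (Imp B C)))"
    using a sv freefor_Var_self
  proof (rule deriv.allE)
    show "ok (sig1 num) \<Gamma> (subst v (Var v) (alls vs (Imp B C)))"
      using HT1_sig1_ctx[OF a] HT1_sig1[OF a] by (intro ok_sig1I) auto
  qed
  have a1': "HT1 num \<Gamma> (alls vs (Imp B C))" using a1 by simp
  have a2: "HT1 num ?G (alls vs (Imp B C))" by (rule HT1_weaken[OF a1' _ sig1_ctx]) blast
  have h: "HT1 num ?G (exs vs B)" by (rule HT1_hyp[OF _ sig1_ctx]) blast
  have dv: "distinct vs" using Cons.prems(3) by simp
  have fr: "\<forall>u\<in>set vs. u \<notin> \<Union>(fv ` ?G) \<and> u \<notin> fv C" using Cons.prems(4) by auto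
  have c: "HT1 num ?G C" by (rule Cons.IH[OF h a2 dv fr])
  have vv: "v \<notin> fv C \<union> \<Union>(fv ` \<Gamma>)" using Cons.prems(4) by auto
  have o: "ok (sig1 num) \<Gamma> C" using HT1_sig1_ctx[OF e] HT1_sig1[OF c] by (intro ok_sig1I)
  show ?case using e c vv o by (rule deriv.exE)
qed

lemma HT1_exsE_ground:
  assumes e: "HT1 num \<Gamma> (exs vs B)" and dv: "distinct vs" and sc: "sig1 num C"
    and fr: "\<forall>v\<in>set vs. v \<notin> \<Union>(fv ` \<Gamma>) \<and> v \<notin> fv C"
    and h: "\<And>c. sortok_on num (set vs) c \<Longrightarrow> HT1 num (insert (fsubst (ground_on (set vs) c) B) \<Gamma>) C"
  shows "HT1 num \<Gamma> C"
proof -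
  have sB: "sig1 num B" using HT1_sig1[OF e] by simp
  have og: "sig1_ctx num \<Gamma>" using HT1_sig1_ctx[OF e] .
  have "HT1 num \<Gamma> (alls vs (Imp B C))"
  proof (rule HT1_allsI_ground[OF dv og])
    show "sig1 num (Imp B C)" using sB sc by simp
    fix c assume c: "sortok_on num (set vs) c"
    have cc: "fsubst (ground_on (set vs) c) C = C"
    proof -
      have "fsubst (ground_on (set vs) c) C = fsubst Var C" by (rule fsubst_cong) (use fr in \<open>auto simp: ground_on_def\<close>)
      then show ?thesis by simp
    qed
    have "HT1 num \<Gamma> (Imp (fsubst (ground_on (set vs) c) B) C)" using h[OF c] og by (rule HT1_impI)
    then show "HT1 num \<Gamma> (fsubst (ground_on (set vs) c) (Imp B C))" using cc by simp
  qed
  then show ?thesis by (rule HT1_exs_mp[OF e _ dv fr])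
qed

definition tuple_eq :: "'p list \<Rightarrow> 'p list \<Rightarrow> 'p form" where
  "tuple_eq as bs = conjs (map2 (\<lambda>a b. Cmp Eq (Pre a) (Pre b)) as bs)"

lemma tuple_eq_props[simp]: "fv (tuple_eq as bs) = {}" "nopa (tuple_eq as bs)" "wf num (tuple_eq as bs)" "sig1 num (tuple_eq as bs)"
  by (auto simp: tuple_eq_def sig1_def dest!: set_zip_leftD set_zip_rightD)

lemma sat_tuple_eq: "length as = length bs \<Longrightarrow> sat num e (tuple_eq as bs) = (as = bs)"
proof (induction as bs rule: list_induct2)
  case Nil then show ?case by (simp add: tuple_eq_def Top_def)
next
  case (Cons x xs y ys) then show ?case by (simp add: tuple_eq_def)
qed

lemma fsubst_tupeq_Pre:
  "map \<tau> xs = map Pre as \<Longrightarrow> map \<tau> ys = map Pre bs \<Longrightarrow> fsubst \<tau> (tupeq xs ys) = tuple_eq as bs"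
proof (induction xs arbitrary: ys as bs)
  case Nil then show ?case by (simp add: fsubst_tupeq tuple_eq_def)
next
  case (Cons x xs)
  obtain a as' where as: "as = a # as'" using Cons.prems(1) by (cases as) auto
  show ?case
  proof (cases ys)
    case Nil then show ?thesis using Cons.prems(2) by (simp add: fsubst_tupeq tuple_eq_def)
  next
    case (Cons y ys')
    obtain b bs' where bs: "bs = b # bs'" using Cons.prems(2) \<open>ys = y # ys'\<close> by (cases bs) auto
    have "fsubst \<tau> (tupeq xs ys') = tuple_eq as' bs'"
      using Cons.prems as bs \<open>ys = y # ys'\<close> by (intro Cons.IH) auto
    then show ?thesis using Cons.prems as bs \<open>ys = y # ys'\<close> by (simp add: fsubst_tupeq tuple_eq_def)
  qed
qed

lemma sat_Neg[simp]: "sat num e (Neg F) = (\<not> sat num e F)" by (simp add: Neg_def)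

lemma lexless_ground_props[simp]:
  "fv (lexless (map Pre as) (map Pre bs) :: 'p form) = {}"
  "wf num (lexless (map Pre as) (map Pre bs))"
  "sig1 num (lexless (map Pre as) (map Pre bs))"
proof -
  show f: "fv (lexless (map Pre as) (map Pre bs) :: 'p form) = {}"
    using fv_lexless[of "map Pre as" "map Pre bs"] by auto
  show w: "wf num (lexless (map Pre as) (map Pre bs))" by (rule wf_lexless) auto
  show "sig1 num (lexless (map Pre as) (map Pre bs))" using w by (simp add: sig1_def)
qed

lemma sat_lexless: "length as = length bs \<Longrightarrow> sat num e (lexless (map Pre as) (map Pre bs)) = (as < bs)"
proof (induction as bs rule: list_induct2)
  case Nil then show ?case by simp
next
  case (Cons x xs y ys) then show ?case by auto
qed

lemma less_append_same: "length a = length p \<Longrightarrow> (a @ s < p @ s) = (a < (p :: 'a::linorder list))"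
proof (induction a p rule: list_induct2)
  case Nil then show ?case by simp
next
  case (Cons x xs y ys) then show ?case by auto
qed

lemma second_least_above:
  fixes ts :: "'a::linorder list"
  assumes "length ts = Suc k" "0 < k" "distinct ts" "\<forall>t\<in>set ts. p \<le> t"
  shows "\<exists>u w. u \<in> set ts \<and> p < u \<and> length w = k \<and> distinct w \<and> set w \<subseteq> set ts \<and> (\<forall>x\<in>set w. u \<le> x)"
proof -
  let ?S = "set ts"
  have cS: "card ?S = Suc k" using assms(1,3) by (simp add: distinct_card)
  let ?m = "Min ?S" and ?S' = "set ts - {Min (set ts)}"
  have mS: "?m \<in> ?S" using cS by (intro Min_in) auto
  have cS': "card ?S' = k" using cS mS by simp
  have neS': "?S' \<noteq> {}"
  proof
    assume "?S' = {}"
    then have "card ?S' = 0" by (simp only: card.empty)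
    then show False using cS' assms(2) by simp
  qed
  let ?u = "Min ?S'"
  have uS': "?u \<in> ?S'" using neS' by (intro Min_in) auto
  have "?m \<le> ?u" using uS' by (intro Min_le) auto
  moreover have "?u \<noteq> ?m" using uS' by simp
  ultimately have "?m < ?u" by (metis order_less_le)
  moreover have "p \<le> ?m" using assms(4) mS by blast
  ultimately have "p < ?u" by simp
  then show ?thesis
    using uS' cS' by (intro HOL.exI[of _ ?u] HOL.exI[of _ "sorted_list_of_set ?S'"]) auto
qed

lemma HT1_not_tuple_eq:
  assumes og: "sig1_ctx num \<Gamma>" and ne: "a \<noteq> b" "length a = length b"
  shows "HT1 num \<Gamma> (Neg (tuple_eq a b))"
  by (rule HT1_true[OF og, where e="\<lambda>_. num 0"]) (use ne sat_tuple_eq[OF ne(2)] in auto)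

lemma HT1_not_tuple_eq_self:
  assumes d: "HT1 num \<Gamma> (Neg (tuple_eq a a))" and sc: "sig1 num C"
  shows "HT1 num \<Gamma> C"
  by (rule HT1_false[OF d _ _ _ sc, where e="\<lambda>_. num 0"]) (auto simp: sat_tuple_eq)

lemma HT1_lexless:
  assumes og: "sig1_ctx num \<Gamma>" and lt: "p < u" "length p = length u"
  shows "HT1 num \<Gamma> (lexless (map Pre p) (map Pre u))"
  by (rule HT1_true[OF og, where e="\<lambda>_. num 0"]) (use lt sat_lexless[OF lt(2)] in auto)

lemma HT1_not_lexless_append:
  assumes og: "sig1_ctx num \<Gamma>" and le: "p \<le> t" "length t = length p"
  shows "HT1 num \<Gamma> (Neg (lexless (map Pre (t @ s)) (map Pre (p @ s))))"
proof (rule HT1_true[OF og, where e="\<lambda>_. num 0"])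
  have "\<not> t @ s < p @ s" using le less_append_same[OF le(2)] by auto
  then show "sat num (\<lambda>_. num 0) (Neg (lexless (map Pre (t @ s)) (map Pre (p @ s))))"
    using sat_lexless[of "t @ s" "p @ s" num] le(2) by simp
next
  show "wf num (Neg (lexless (map Pre (t @ s)) (map Pre (p @ s))))"
    using lexless_ground_props(2)[of num "t @ s" "p @ s"] by simp
  show "fv (Neg (lexless (map Pre (t @ s)) (map Pre (p @ s)))) = {}"
    using lexless_ground_props(1)[of "t @ s" "p @ s"] by simp
qed simp

lemma substt_comp_Pre[simp]: "substt v s \<circ> Pre = Pre"
  by (rule ext) simp

lemma Atleast_eq_subst:
  assumes d: "HT1 num \<Gamma> (Atleast A B C (map Pre l) s)" and e: "HT1 num \<Gamma> (Cmp Eq s t)"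
    and so: "itrm num s" "itrm num t"
  shows "HT1 num \<Gamma> (Atleast A B C (map Pre l) t)"
proof -
  let ?F = "Atleast A B C (map Pre l) (Var (IV 0))"
  have d': "HT1 num \<Gamma> (subst (IV 0) s ?F)" using d by simp
  have s1: "sortok num (IV 0) s" "sortok num (IV 0) t" using so by (auto simp: sortok_def)
  have "sig1 num (Atleast A B C (map Pre l) t)"
    using HT1_sig1[OF d] so by (auto simp: sig1_def itrm_gtrm)
  then have o: "ok (sig1 num) \<Gamma> (Atleast A B C (map Pre l) t)" using HT1_sig1_ctx[OF d] by (intro ok_sig1I)
  have "HT1 num \<Gamma> (subst (IV 0) t ?F)" by (rule deriv.eqSubst[OF e d' s1]) (simp_all add: o)
  then show ?thesis by simp
qed

lemma Atleast_succ_iff_Plus: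
  assumes m: "strict_mono num"
  shows "HT1 num \<Gamma> (Atleast A B C (map Pre l) (Plus (Pre (num k)) (Pre (num 1))))
     \<longleftrightarrow> HT1 num \<Gamma> (Atleast A B C (map Pre l) (Pre (num (k + 1))))"
proof -
  have t: "\<And>j. toint num (num j) = j" by (rule toint_num[OF m])
  have eq: "HT1 num \<Gamma> (Cmp Eq (Plus (Pre (num k)) (Pre (num 1))) (Pre (num (k + 1))))"
    "HT1 num \<Gamma> (Cmp Eq (Pre (num (k + 1))) (Plus (Pre (num k)) (Pre (num 1))))"
    if "sig1_ctx num \<Gamma>"
    by (rule HT1_true[OF that, where e="\<lambda>_. num 0"]; auto simp: t gtrm_def)+
  show ?thesis
  proof
    assume d: "HT1 num \<Gamma> (Atleast A B C (map Pre l) (Plus (Pre (num k)) (Pre (num 1))))"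
    show "HT1 num \<Gamma> (Atleast A B C (map Pre l) (Pre (num (k + 1))))"
      by (rule Atleast_eq_subst[OF d eq(1)[OF HT1_sig1_ctx[OF d]]]) auto
  next
    assume d: "HT1 num \<Gamma> (Atleast A B C (map Pre l) (Pre (num (k + 1))))"
    show "HT1 num \<Gamma> (Atleast A B C (map Pre l) (Plus (Pre (num k)) (Pre (num 1))))"
      by (rule Atleast_eq_subst[OF d eq(2)[OF HT1_sig1_ctx[OF d]]]) auto
  qed
qed

lemma set_pairs: "set (pairs n) = {(i, j). i < j \<and> j < n}"
  by (auto simp: pairs_def)

lemma copyvars_concat: "concat (map (copyvars b L) [0..<k]) = map (\<lambda>m. GV (b + m)) [0..<k * L]"
proof (induction k)
  case 0 then show ?case by simp
next
  case (Suc k)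
  have "[0..<Suc k * L] = [0..<k * L] @ map (\<lambda>j. k * L + j) [0..<L]"
    using upt_add_eq_append[of 0 "k * L" L] by (simp add: map_add_upt add.commute)
  then show ?case using Suc by (simp add: copyvars_def add.assoc)
qed

definition block_asg :: "nat \<Rightarrow> nat \<Rightarrow> 'p list list \<Rightarrow> var \<Rightarrow> 'p" where
  "block_asg b L ts v = (case v of GV n \<Rightarrow> ts ! ((n - b) div L) ! ((n - b) mod L) | IV n \<Rightarrow> undefined)"

lemma map_block_asg: "i < length ts \<Longrightarrow> length (ts ! i) = L \<Longrightarrow> map (block_asg b L ts) (copyvars b L i) = ts ! i"
proof -
  assume i: "i < length ts" and l: "length (ts ! i) = L"
  show ?thesis
  proof (rule nth_equalityI)
    show "length (map (block_asg b L ts) (copyvars b L i)) = length (ts ! i)" using l by (simp add: copyvars_def)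
    fix j assume "j < length (map (block_asg b L ts) (copyvars b L i))"
    then have j: "j < L" by (simp add: copyvars_def)
    then have "(i * L + j) div L = i" "(i * L + j) mod L = j" by auto
    then show "map (block_asg b L ts) (copyvars b L i) ! j = ts ! i ! j"
      using j by (simp add: copyvars_def block_asg_def add.assoc)
  qed
qed

section \<open>The translated axioms \<open>D\<^sub>0\<close> are derivable\<close>

locale start_setting =
  fixes num :: "int \<Rightarrow> 'p::linorder" and X V :: "var list" and G :: "'p form"
  assumes mono: "strict_mono num" and agg: "aggwf num X V G"
begin

abbreviation "U \<equiv> above_vars X V G"
abbreviation "K \<equiv> above_body X V G"
abbreviation "Y i \<equiv> copyvars (freshb K U) (length X) i"
abbreviation "Ys n \<equiv> concat (map Y [0..<n])"
abbreviation "inst a s \<equiv> ground_on (set (X @ V)) (tuple_asg (X @ V) (a @ s))"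

definition G_at :: "'p list \<Rightarrow> 'p list \<Rightarrow> 'p form" where
  "G_at a s = fsubst (inst a s) G"

definition K_at :: "'p list \<Rightarrow> 'p list \<Rightarrow> 'p list \<Rightarrow> 'p form" where
  "K_at t a s = And (Neg (lexless (map Pre (t @ s)) (map Pre (a @ s)))) (And (G_at t s) (G_at a s))"

lemma agg_props: "distinct (X @ V)" "\<forall>v\<in>set (X @ V). isG v" "base G" "fv G \<subseteq> set X \<union> set V" "wf num G"
  using agg by (auto simp: aggwf_def aggok_def)

lemmas U_props = above_vars_props[OF conjunct1[OF agg[unfolded aggwf_def]]]

lemma aggwf_K: "aggwf num U (X @ V) K"
  by (rule aggwf_above_body[OF agg])

lemma map_inst: "length a = length X \<Longrightarrow> length s = length V \<Longrightarrow> map (inst a s) (X @ V) = map Pre (a @ s)"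
  using agg_props(1) by (intro map_ground_on_tuple_asg) auto

lemma sortok_on_XV: "sortok_on num (set (X @ V)) c"
  using agg_props(2) by (auto simp: sortok_on_def)

lemma G_at_closed: "fv (G_at a s) = {}" "sig1 num (G_at a s)"
proof -
  have "fv (G_at a s) \<subseteq> (\<Union>v\<in>fv G. tvars (inst a s v))" unfolding G_at_def by (rule fv_fsubst)
  also have "\<dots> = {}" using agg_props(4) by (auto simp: ground_on_def)
  finally show "fv (G_at a s) = {}" by simp
  show "sig1 num (G_at a s)" unfolding G_at_def using agg_props(3,5) sortok_on_XV
    by (intro sig1_fsubst_ground_on) (auto simp: sig1_def base_noStart)
qed

lemma fsubst_G_eq_G_at:
  assumes m: "map \<tau> (X @ V) = map Pre (a @ s)" and l: "length a = length X" "length s = length V"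
  shows "fsubst \<tau> G = G_at a s"
  unfolding G_at_def
proof (rule fsubst_cong)
  fix v assume "v \<in> fv G"
  then have v: "v \<in> set (X @ V)" using agg_props(4) by auto
  have "map \<tau> (X @ V) = map (inst a s) (X @ V)" using m map_inst[OF l] by simp
  then show "\<tau> v = inst a s v" using v unfolding map_eq_conv by blast
qed

lemma fsubst_K_eq_K_at:
  assumes m: "map \<tau> (X @ V) = map Pre (p @ s)" and mu: "map \<tau> U = map Pre t"
    and l: "length p = length X" "length t = length X" "length s = length V"
  shows "fsubst \<tau> K = K_at t p s"
proof -
  have "map \<tau> X @ map \<tau> V = map Pre p @ map Pre s" using m by simp
  then have mX: "map \<tau> X = map Pre p" "map \<tau> V = map Pre s"
    using l(1) by (simp_all add: append_eq_append_conv)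
  have dX: "distinct X" and XV: "set X \<inter> set V = {}" using agg_props(1) by auto
  have lU: "length X = length U" using U_props(1) by simp
  let ?t = "\<lambda>v. tsubst \<tau> (renaming X U v)"
  have "map ?t X = map (tsubst \<tau>) (map Var U)" unfolding renaming_map[OF dX lU, symmetric] by simp
  then have a1: "map ?t X = map Pre t" using mu by simp
  have "?t v = \<tau> v" if "v \<in> set V" for v using that XV by (subst renaming_out) auto
  then have "map ?t V = map \<tau> V" by simp
  then have a2: "map ?t V = map Pre s" using mX(2) by simp
  have cf: "capture_free (renaming X U) G"
    by (rule capture_free_renaming) (use U_props(4) bvars_allvars in blast)
  have "fsubst \<tau> (renameF X U G) = G_at t s"
    unfolding renameF_above_vars[OF conjunct1[OF agg[unfolded aggwf_def]]] fsubst_fsubst[OF cf]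
    by (rule fsubst_G_eq_G_at) (use a1 a2 l in auto)
  moreover have "fsubst \<tau> G = G_at p s" by (rule fsubst_G_eq_G_at[OF m l(1,3)])
  moreover have "map (tsubst \<tau>) (map Var (U @ V)) = map Pre (t @ s)"
    and "map (tsubst \<tau>) (map Var (X @ V)) = map Pre (p @ s)" using mu mX by simp_all
  ultimately show ?thesis unfolding above_body_def K_at_def by (simp del: map_map map_append)
qed

lemma Y_fresh: "v \<in> set (Y i) \<Longrightarrow> v \<notin> allvars K \<and> v \<notin> set U"
proof -
  assume "v \<in> set (Y i)"
  then have v: "freshb K U \<le> vidx v" by (auto simp: copyvars_def)
  have "\<And>u. u \<in> allvars K \<union> set U \<Longrightarrow> vidx u < freshb K U" by (rule freshb_gt)
  then show ?thesis using v by fastforce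
qed

lemma XVU_in_K: "set X \<union> set V \<union> set U \<subseteq> allvars K"
proof -
  have "length (map Var (U @ V) :: 'p trm list) = length (map Var (X @ V) :: 'p trm list)"
    using U_props(1) by simp
  then have "allvars (lexless (map Var (U @ V)) (map Var (X @ V)) :: 'p form) = set U \<union> set V \<union> set X"
    by (simp add: allvars_lexless) blast
  then show ?thesis by (auto simp: above_body_def Neg_def)
qed

lemma Y_disjoint: "set (Y i) \<inter> set (X @ V) = {}" "set (Y i) \<inter> bvars K = {}" "set (Y i) \<inter> set U = {}"
  using Y_fresh XVU_in_K bvars_allvars by fastforce+

lemma Ys_disjoint: "set (Ys n) \<inter> set (X @ V) = {}"
  using Y_disjoint(1) by fastforce

lemma Ys_distinct: "distinct (Ys n)"
  by (simp add: copyvars_concat distinct_map inj_on_def)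

lemma fsubst_renamed_K_eq_K_at:
  assumes m: "map \<tau> (X @ V) = map Pre (p @ s)" and mu: "map \<tau> (Y i) = map Pre t"
    and l: "length p = length X" "length t = length X" "length s = length V"
  shows "fsubst \<tau> (renameF U (Y i) K) = K_at t p s"
proof -
  have lY: "length U = length (Y i)" using U_props(1) by (simp add: copyvars_def)
  have dU: "distinct U" using U_props(2) by simp
  have r: "renameF U (Y i) K = fsubst (renaming U (Y i)) K"
    by (rule renameF_fsubst[OF lY dU]) (use Y_disjoint in auto)
  have cf: "capture_free (renaming U (Y i)) K" by (rule capture_free_renaming) (use Y_disjoint in auto)
  let ?t = "\<lambda>v. tsubst \<tau> (renaming U (Y i) v)"
  have "?t v = \<tau> v" if "v \<in> set (X @ V)" for v using that U_props(2) by (subst renaming_out) auto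
  then have "map ?t (X @ V) = map \<tau> (X @ V)" by (rule map_cong[OF refl])
  then have a1: "map ?t (X @ V) = map Pre (p @ s)" using m by (rule trans)
  have "map ?t U = map (tsubst \<tau>) (map Var (Y i))" unfolding renaming_map[OF dU lY, symmetric] by simp
  then have a2: "map ?t U = map Pre t" using mu by simp
  show ?thesis unfolding r fsubst_fsubst[OF cf] by (rule fsubst_K_eq_K_at[OF a1 a2 l])
qed

definition count_body :: "nat \<Rightarrow> 'p form" where
  "count_body n = And (conjs (map (\<lambda>i. renameF U (Y i) K) [0..<n]))
                      (conjs (map (\<lambda>(i, j). Neg (tupeq (Y i) (Y j))) (pairs n)))"

definition atleast_at :: "'p list \<Rightarrow> 'p list \<Rightarrow> int \<Rightarrow> 'p form" where
  "atleast_at a s k = fsubst (inst a s) (atleastF num U K (num k))"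

abbreviation Atl :: "'p list \<Rightarrow> 'p list \<Rightarrow> 'p trm \<Rightarrow> 'p form" where
  "Atl a s n \<equiv> Atleast U (X @ V) K (map Pre (a @ s)) n"

lemma Atl_sig1: "length a = length X \<Longrightarrow> length s = length V \<Longrightarrow> sig1 num (Atl a s (Pre r))"
  using aggwf_K by (auto simp: sig1_def aggwf_def)

lemma atleastF_eq_count_body:
  "atleastF num U K (num k) = (if k \<le> 0 then Top else exs (Ys (nat k)) (count_body (nat k)))"
  unfolding atleastF_def Let_def count_body_def using toint_num[OF mono] U_props(1) by auto

lemma atleast_at_nonpos: "k \<le> 0 \<Longrightarrow> atleast_at a s k = Top"
  unfolding atleast_at_def atleastF_eq_count_body by simp

lemma atleast_at_pos:
  "0 < k \<Longrightarrow> atleast_at a s k = exs (Ys (nat k)) (fsubst (inst a s) (count_body (nat k)))"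
proof -
  assume k: "0 < k"
  have "\<forall>v\<in>set (Ys (nat k)). inst a s v = Var v"
    using Ys_disjoint[of "nat k"] by (auto simp: ground_on_def)
  then show ?thesis unfolding atleast_at_def atleastF_eq_count_body using k by (simp add: fsubst_exs)
qed

lemma sig1_count_body: "sig1 num (count_body n)"
proof -
  have wK: "wf num K" and bK: "base K" using aggwf_K by (auto simp: aggwf_def aggok_def)
  have "\<And>i. sig1 num (renameF U (Y i) K)"
    using wf_renameF[OF wK U_props(3)] bK by (auto simp: sig1_def base_noStart)
  moreover have "\<And>i j. sig1 num (tupeq (Y i) (Y j) :: 'p form)" by (simp add: sig1_def)
  ultimately show ?thesis unfolding count_body_def by (auto split: prod.splits)
qed

lemma Atl_iff_atleast_at:
  assumes og: "sig1_ctx num \<Gamma>" and l: "length a = length X" "length s = length V"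
  shows "HT1 num \<Gamma> (Iff (Atl a s (Pre (num k))) (atleast_at a s k))"
proof -
  let ?F = "alls (X @ V) (Iff (Atleast U (X @ V) K (map Var (X @ V)) (Pre (num k))) (atleastF num U K (num k)))"
  have ag: "aggok U (X @ V) K" and wK: "wf num K" using aggwf_K by (auto simp: aggwf_def)
  have "wf num (atleastF num U K (num k))" by (rule wf_atleastF[OF ag wK])
  moreover have "noStart (atleastF num U K (num k))"
    using ag by (intro base_noStart base_atleastF) (simp add: aggok_def)
  ultimately have "sig1 num ?F" using ag wK by (auto simp: sig1_def)
  moreover have "?F \<in> Defs num" using aggwf_K unfolding Defs_def by blast
  ultimately have "HT1 num \<Gamma> ?F" by (intro deriv.ax ok_sig1I[OF og]) (auto simp: HTax_def)
  then have "HT1 num \<Gamma> (fsubst (inst a s) (Iff (Atleast U (X @ V) K (map Var (X @ V)) (Pre (num k)))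
      (atleastF num U K (num k))))" by (rule HT1_allsE_ground[OF _ agg_props(1) sortok_on_XV])
  moreover have "map (tsubst (inst a s)) (map Var (X @ V)) = map Pre (a @ s)" using map_inst[OF l] by simp
  ultimately show ?thesis unfolding atleast_at_def by simp
qed

lemma fsubst_count_body:
  assumes l: "length a = length X" "length s = length V"
  shows "fsubst (ground_on (set (Ys n)) e) (fsubst (inst a s) (count_body n)) =
     And (conjs (map (\<lambda>i. K_at (map e (Y i)) a s) [0..<n]))
         (conjs (map (\<lambda>(i, j). Neg (tuple_eq (map e (Y i)) (map e (Y j)))) (pairs n)))"
proof -
  define \<tau> where "\<tau> v = tsubst (ground_on (set (Ys n)) e) (inst a s v)" for v
  have c: "fsubst (ground_on (set (Ys n)) e) (fsubst (inst a s) (count_body n)) = fsubst \<tau> (count_body n)"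
    unfolding \<tau>_def by (rule fsubst_fsubst) simp
  have m: "map \<tau> (X @ V) = map Pre (a @ s)"
  proof -
    have "map \<tau> (X @ V) = map (tsubst (ground_on (set (Ys n)) e)) (map (inst a s) (X @ V))"
      by (simp add: \<tau>_def)
    also have "\<dots> = map Pre (a @ s)" unfolding map_inst[OF l] by simp
    finally show ?thesis .
  qed
  have my: "map \<tau> (Y i) = map Pre (map e (Y i))" if i: "i < n" for i
  proof -
    have "\<tau> v = Pre (e v)" if v: "v \<in> set (Y i)" for v
    proof -
      have "v \<notin> set (X @ V)" using Y_disjoint(1) v by blast
      moreover have "v \<in> set (Ys n)" using v i by auto
      ultimately show ?thesis by (simp add: \<tau>_def ground_on_def)
    qed
    then show ?thesis by simp
  qed
  have le: "\<And>i. length (map e (Y i)) = length X" by (simp add: copyvars_def)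
  have p1: "map (fsubst \<tau>) (map (\<lambda>i. renameF U (Y i) K) [0..<n]) = map (\<lambda>i. K_at (map e (Y i)) a s) [0..<n]"
    using fsubst_renamed_K_eq_K_at[OF m my l(1) le l(2)] by simp
  have p2: "map (fsubst \<tau>) (map (\<lambda>(i, j). Neg (tupeq (Y i) (Y j))) (pairs n))
      = map (\<lambda>(i, j). Neg (tuple_eq (map e (Y i)) (map e (Y j)))) (pairs n)"
    using fsubst_tupeq_Pre[OF my my] by (auto simp: set_pairs)
  have "fsubst \<tau> (count_body n) = And (conjs (map (fsubst \<tau>) (map (\<lambda>i. renameF U (Y i) K) [0..<n])))
      (conjs (map (fsubst \<tau>) (map (\<lambda>(i, j). Neg (tupeq (Y i) (Y j))) (pairs n))))"
    by (simp only: count_body_def fsubst.simps fsubst_conjs)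
  then show ?thesis unfolding c p1 p2 .
qed

lemma atleast_at_intro_K_at:
  assumes k: "0 < k" and og: "sig1_ctx num \<Gamma>" and l: "length a = length X" "length s = length V"
    and lt: "length ts = nat k" "\<forall>t\<in>set ts. length t = length X"
    and hk: "\<And>i. i < nat k \<Longrightarrow> HT1 num \<Gamma> (K_at (ts ! i) a s)"
    and hd: "\<And>i j. i < j \<Longrightarrow> j < nat k \<Longrightarrow> HT1 num \<Gamma> (Neg (tuple_eq (ts ! i) (ts ! j)))"
  shows "HT1 num \<Gamma> (atleast_at a s k)"
proof -
  let ?n = "nat k"
  let ?e = "block_asg (freshb K U) (length X) ts"
  have me: "\<And>i. i < ?n \<Longrightarrow> map ?e (Y i) = ts ! i"
    using lt by (intro map_block_asg) auto
  have "HT1 num \<Gamma> (fsubst (ground_on (set (Ys ?n)) ?e) (fsubst (inst a s) (count_body ?n)))"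
    unfolding fsubst_count_body[OF l]
  proof (rule HT1_conjI; rule HT1_conjsI[OF og])
    fix F assume "F \<in> set (map (\<lambda>i. K_at (map ?e (Y i)) a s) [0..<?n])"
    then show "HT1 num \<Gamma> F" using hk me by auto
  next
    fix F assume "F \<in> set (map (\<lambda>(i, j). Neg (tuple_eq (map ?e (Y i)) (map ?e (Y j)))) (pairs ?n))"
    then show "HT1 num \<Gamma> F" using hd me by (auto simp: set_pairs)
  qed
  then have "HT1 num \<Gamma> (exs (Ys ?n) (fsubst (inst a s) (count_body ?n)))"
    by (rule HT1_exsI_ground[OF _ Ys_distinct _ sig1_fsubst_ground_on[OF sig1_count_body sortok_on_XV]])
      (auto simp: sortok_on_def copyvars_def)
  then show ?thesis unfolding atleast_at_pos[OF k] .
qed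

lemma atleast_at_elim_K_at:
  assumes k: "0 < k" and d: "HT1 num \<Gamma> (atleast_at a s k)" and l: "length a = length X" "length s = length V"
    and cl: "\<Union>(fv ` \<Gamma>) = {}" "fv C = {}" "sig1 num C"
    and h: "\<And>ts \<Gamma>'. length ts = nat k \<Longrightarrow> \<forall>t\<in>set ts. length t = length X \<Longrightarrow> \<Gamma> \<subseteq> \<Gamma>' \<Longrightarrow>
       sig1_ctx num \<Gamma>' \<Longrightarrow> (\<forall>i<nat k. HT1 num \<Gamma>' (K_at (ts ! i) a s)) \<Longrightarrow>
       (\<forall>i j. i < j \<longrightarrow> j < nat k \<longrightarrow> HT1 num \<Gamma>' (Neg (tuple_eq (ts ! i) (ts ! j)))) \<Longrightarrow> HT1 num \<Gamma>' C"
  shows "HT1 num \<Gamma> C"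
proof -
  let ?n = "nat k"
  let ?B = "fsubst (inst a s) (count_body ?n)"
  have e: "HT1 num \<Gamma> (exs (Ys ?n) ?B)" using d unfolding atleast_at_pos[OF k] .
  show ?thesis
  proof (rule HT1_exsE_ground[OF e Ys_distinct cl(3)])
    show "\<forall>v\<in>set (Ys ?n). v \<notin> \<Union>(fv ` \<Gamma>) \<and> v \<notin> fv C" using cl by simp
    fix c assume c: "sortok_on num (set (Ys ?n)) c"
    let ?H = "fsubst (ground_on (set (Ys ?n)) c) ?B"
    let ?ts = "map (\<lambda>i. map c (Y i)) [0..<?n]"
    have "sig1 num ?H" by (intro sig1_fsubst_ground_on sig1_count_body sortok_on_XV c)
    then have og: "sig1_ctx num (insert ?H \<Gamma>)" using HT1_sig1_ctx[OF d] by simp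
    have "HT1 num (insert ?H \<Gamma>) ?H" by (rule HT1_hyp[OF _ og]) simp
    then have hH: "HT1 num (insert ?H \<Gamma>) (And (conjs (map (\<lambda>i. K_at (map c (Y i)) a s) [0..<?n]))
         (conjs (map (\<lambda>(i, j). Neg (tuple_eq (map c (Y i)) (map c (Y j)))) (pairs ?n))))"
      unfolding fsubst_count_body[OF l] .
    show "HT1 num (insert ?H \<Gamma>) C"
    proof (rule h[of ?ts])
      show "\<forall>i<?n. HT1 num (insert ?H \<Gamma>) (K_at (?ts ! i) a s)"
        using HT1_conjsD[OF HT1_conjunct1[OF hH]] by simp
      show "\<forall>i j. i < j \<longrightarrow> j < ?n \<longrightarrow> HT1 num (insert ?H \<Gamma>) (Neg (tuple_eq (?ts ! i) (?ts ! j)))"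
        using HT1_conjsD[OF HT1_conjunct2[OF hH]] by (force simp: set_pairs)
    qed (use og in \<open>auto simp: copyvars_def\<close>)
  qed
qed

lemma K_at_G_at:
  assumes "HT1 num \<Gamma> (K_at t p s)"
  shows "HT1 num \<Gamma> (G_at t s)" "HT1 num \<Gamma> (G_at p s)"
  using HT1_conjunct2[OF assms[unfolded K_at_def]] by (rule HT1_conjunct1, rule HT1_conjunct2)

lemma K_at_intro:
  assumes og: "sig1_ctx num \<Gamma>" and le: "p \<le> t" "length t = length p"
    and g1: "HT1 num \<Gamma> (G_at t s)" and g2: "HT1 num \<Gamma> (G_at p s)"
  shows "HT1 num \<Gamma> (K_at t p s)"
  unfolding K_at_def by (rule HT1_conjI[OF HT1_not_lexless_append[OF og le] HT1_conjI[OF g1 g2]])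

lemma K_at_below_false:
  assumes d: "HT1 num \<Gamma> (K_at t p s)" and lt: "t < p" "length t = length p" and sc: "sig1 num C"
  shows "HT1 num \<Gamma> C"
proof -
  have a: "HT1 num \<Gamma> (Neg (lexless (map Pre (t @ s)) (map Pre (p @ s))))"
    using HT1_conjunct1[OF d[unfolded K_at_def]] .
  have "t @ s < p @ s" using lt less_append_same[OF lt(2)] by auto
  then have "\<not> sat num (\<lambda>_. num 0) (Neg (lexless (map Pre (t @ s)) (map Pre (p @ s))))"
    using sat_lexless[of "t @ s" "p @ s" num] lt(2) by simp
  then show ?thesis
    using HT1_false[OF a _ _ _ sc] lexless_ground_props(1)[of "t @ s" "p @ s"] by (simp del: map_append)
qed

lemma Atl_intro:
  assumes k: "0 < k" and og: "sig1_ctx num \<Gamma>" and l: "length a = length X" "length s = length V"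
    and ts: "length ts = nat k" "distinct ts" "\<forall>t\<in>set ts. a \<le> t \<and> length t = length X"
    and ga: "HT1 num \<Gamma> (G_at a s)" and gt: "\<forall>t\<in>set ts. HT1 num \<Gamma> (G_at t s)"
  shows "HT1 num \<Gamma> (Atl a s (Pre (num k)))"
proof (rule HT1_iffD2[OF Atl_iff_atleast_at[OF og l]], rule atleast_at_intro_K_at[OF k og l ts(1)])
  show "\<forall>t\<in>set ts. length t = length X" using ts(3) by blast
next
  fix i assume "i < nat k"
  then have t: "ts ! i \<in> set ts" using ts(1) by simp
  show "HT1 num \<Gamma> (K_at (ts ! i) a s)"
    by (rule K_at_intro[OF og _ _ gt[rule_format, OF t] ga]) (use ts(3) t l in auto)
next
  fix i j assume ij: "i < j" "j < nat k"
  have "ts ! i \<noteq> ts ! j" using ts(1,2) ij by (simp add: nth_eq_iff_index_eq)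
  moreover have "length (ts ! i) = length (ts ! j)" using ts ij by simp
  ultimately show "HT1 num \<Gamma> (Neg (tuple_eq (ts ! i) (ts ! j)))" by (rule HT1_not_tuple_eq[OF og])
qed

text \<open>The k witnesses of Atl a s k may be taken distinct and lexicographically above a:
  any other case is refuted by a true ground fact.\<close>

lemma Atl_elim:
  assumes k: "0 < k" and d: "HT1 num \<Gamma> (Atl a s (Pre (num k)))"
    and l: "length a = length X" "length s = length V"
    and cl: "\<Union>(fv ` \<Gamma>) = {}" "fv C = {}" "sig1 num C"
    and h: "\<And>ts \<Gamma>'. length ts = nat k \<Longrightarrow> distinct ts \<Longrightarrow> \<forall>t\<in>set ts. a \<le> t \<and> length t = length X \<Longrightarrow>
       \<Gamma> \<subseteq> \<Gamma>' \<Longrightarrow> sig1_ctx num \<Gamma>' \<Longrightarrow> HT1 num \<Gamma>' (G_at a s) \<Longrightarrow> \<forall>t\<in>set ts. HT1 num \<Gamma>' (G_at t s) \<Longrightarrow>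
       HT1 num \<Gamma>' C"
  shows "HT1 num \<Gamma> C"
proof (rule atleast_at_elim_K_at[OF k _ l cl])
  show "HT1 num \<Gamma> (atleast_at a s k)"
    by (rule HT1_iffD1[OF Atl_iff_atleast_at[OF HT1_sig1_ctx[OF d] l] d])
next
  fix ts \<Gamma>' assume lt: "length ts = nat k" and lts: "\<forall>t\<in>set ts. length t = length X"
    and sub: "\<Gamma> \<subseteq> \<Gamma>'" and og: "sig1_ctx num \<Gamma>'"
    and hk: "\<forall>i<nat k. HT1 num \<Gamma>' (K_at (ts ! i) a s)"
    and hd: "\<forall>i j. i < j \<longrightarrow> j < nat k \<longrightarrow> HT1 num \<Gamma>' (Neg (tuple_eq (ts ! i) (ts ! j)))"
  have hk': "HT1 num \<Gamma>' (K_at t a s)" if "t \<in> set ts" for t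
    using that hk lt by (auto simp: in_set_conv_nth)
  show "HT1 num \<Gamma>' C"
  proof (cases "\<exists>t\<in>set ts. t < a")
    case True
    then obtain t where "t \<in> set ts" "t < a" by blast
    then show ?thesis using K_at_below_false[OF hk' _ _ cl(3)] lts l by auto
  next
    case above: False
    show ?thesis
    proof (cases "distinct ts")
      case False
      then obtain i j where ij: "i < j" "j < length ts" "ts ! i = ts ! j"
        by (auto simp: distinct_conv_nth) (metis linorder_neqE_nat)
      then have "HT1 num \<Gamma>' (Neg (tuple_eq (ts ! j) (ts ! j)))" using hd lt by metis
      then show ?thesis using HT1_not_tuple_eq_self cl(3) by blast
    next
      case True
      have "ts ! 0 \<in> set ts" using lt k by simp
      then have "HT1 num \<Gamma>' (G_at a s)" by (rule K_at_G_at(2)[OF hk'])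
      moreover have "\<forall>t\<in>set ts. a \<le> t \<and> length t = length X" using above lts by (auto simp: not_less)
      moreover have "\<forall>t\<in>set ts. HT1 num \<Gamma>' (G_at t s)" using hk' K_at_G_at(1) by blast
      ultimately show ?thesis using h[OF lt True _ sub og] by blast
    qed
  qed
qed

lemma D0_nonpos_ground:
  assumes og: "sig1_ctx num \<Gamma>" and l: "length p = length X" "length q = length V"
  shows "HT1 num \<Gamma> (Imp (Cmp Le (Pre (num k)) (Pre (num 0))) (Atl p q (Pre (num k))))"
proof (rule HT1_impI[OF _ og])
  let ?C = "Cmp Le (Pre (num k)) (Pre (num 0))"
  have og': "sig1_ctx num (insert ?C \<Gamma>)" using og by simp
  show "HT1 num (insert ?C \<Gamma>) (Atl p q (Pre (num k)))"
  proof (cases "k \<le> 0")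
    case True
    show ?thesis
      by (rule HT1_iffD2[OF Atl_iff_atleast_at[OF og' l]]) (simp add: atleast_at_nonpos[OF True] HT1_Top[OF og'])
  next
    case False
    have h: "HT1 num (insert ?C \<Gamma>) ?C" by (rule HT1_hyp[OF _ og']) simp
    have "\<not> sat num (\<lambda>_. num 0) ?C" using False mono by (simp add: strict_mono_less_eq)
    then show ?thesis by (rule HT1_false[OF h, rotated 2]) (use Atl_sig1[OF l] in simp_all)
  qed
qed

lemma D0_one_ground:
  assumes og: "sig1_ctx num \<Gamma>" and cl: "\<Union>(fv ` \<Gamma>) = {}" and l: "length p = length X" "length q = length V"
  shows "HT1 num \<Gamma> (Iff (Atl p q (Pre (num 1))) (G_at p q))"
proof (rule HT1_iffI)
  let ?\<Gamma> = "insert (Atl p q (Pre (num 1))) \<Gamma>"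
  have og': "sig1_ctx num ?\<Gamma>" using og Atl_sig1[OF l] by simp
  have "HT1 num ?\<Gamma> (G_at p q)"
    by (rule Atl_elim[OF _ HT1_hyp[OF _ og'] l]) (use cl G_at_closed in auto)
  then show "HT1 num \<Gamma> (Imp (Atl p q (Pre (num 1))) (G_at p q))" by (rule HT1_impI[OF _ og])
next
  let ?\<Gamma> = "insert (G_at p q) \<Gamma>"
  have og': "sig1_ctx num ?\<Gamma>" using og G_at_closed by simp
  have g: "HT1 num ?\<Gamma> (G_at p q)" by (rule HT1_hyp[OF _ og']) simp
  have "HT1 num ?\<Gamma> (Atl p q (Pre (num 1)))"
    by (rule Atl_intro[OF _ og' l, where ts="[p]"]) (use g l in auto)
  then show "HT1 num \<Gamma> (Imp (G_at p q) (Atl p q (Pre (num 1))))" by (rule HT1_impI[OF _ og])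
qed

abbreviation "W \<equiv> map (\<lambda>j. GV (freshb G (X @ V) + 1 + j)) [0..<length X]"

definition succ_witness :: "'p list \<Rightarrow> 'p list \<Rightarrow> int \<Rightarrow> 'p form" where
  "succ_witness p q k =
     And (lexless (map Pre p) (map Var W)) (Atleast U (X @ V) K (map Var W @ map Pre q) (Pre (num k)))"

definition succ_rhs :: "'p list \<Rightarrow> 'p list \<Rightarrow> int \<Rightarrow> 'p form" where
  "succ_rhs p q k = And (G_at p q) (exs W (succ_witness p q k))"

lemma W_distinct: "distinct W"
  by (simp add: distinct_map inj_on_def)

lemma succ_witness_props:
  assumes l: "length p = length X" "length q = length V"
  shows "fv (succ_witness p q k) \<subseteq> set W" "sig1 num (succ_witness p q k)"
proof -
  have "fv (lexless (map Pre p) (map Var W) :: 'p form) \<subseteq> set W"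
    using fv_lexless[of "map Pre p" "map Var W"] by auto
  then show "fv (succ_witness p q k) \<subseteq> set W" by (auto simp: succ_witness_def)
  have "wf num (lexless (map Pre p) (map Var W))" by (rule wf_lexless) auto
  then show "sig1 num (succ_witness p q k)" using aggwf_K l by (auto simp: succ_witness_def sig1_def aggwf_def)
qed

lemma succ_rhs_closed:
  assumes l: "length p = length X" "length q = length V"
  shows "fv (succ_rhs p q k) = {}" "sig1 num (succ_rhs p q k)"
  using succ_witness_props[OF l, of k] G_at_closed[of p q] by (auto simp: succ_rhs_def)

lemma fsubst_succ_witness:
  "map d W = u \<Longrightarrow> fsubst (ground_on (set W) d) (succ_witness p q k)
     = And (lexless (map Pre p) (map Pre u)) (Atl u q (Pre (num k)))"
proof -
  assume u: "map d W = u"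
  have "map (tsubst (ground_on (set W) d)) (map Var W) = map (\<lambda>v. Pre (d v)) W"
    by (simp add: ground_on_def)
  then have "map (tsubst (ground_on (set W) d)) (map Var W) = map Pre u" using u by auto
  moreover have "map (tsubst (ground_on (set W) d)) (map Pre l) = map Pre l" for l :: "'p list" by simp
  ultimately show ?thesis unfolding succ_witness_def by (simp del: map_map)
qed

lemma Atl_succ_dest:
  assumes og: "sig1_ctx num \<Gamma>" and cl: "\<Union>(fv ` \<Gamma>) = {}"
    and l: "length p = length X" "length q = length V"
    and k: "0 < k" and d: "HT1 num \<Gamma> (Atl p q (Pre (num (k + 1))))"
  shows "HT1 num \<Gamma> (succ_rhs p q k)"
proof (rule Atl_elim[OF _ d l cl succ_rhs_closed[OF l]])
  show "0 < k + 1" using k by simp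
  fix ts \<Gamma>' assume lt: "length ts = nat (k + 1)" and dt: "distinct ts"
    and ts: "\<forall>t\<in>set ts. p \<le> t \<and> length t = length X" and og': "sig1_ctx num \<Gamma>'"
    and gp: "HT1 num \<Gamma>' (G_at p q)" and gt: "\<forall>t\<in>set ts. HT1 num \<Gamma>' (G_at t q)"
  obtain u w where u: "u \<in> set ts" "p < u"
    and w: "length w = nat k" "distinct w" "set w \<subseteq> set ts" "\<forall>x\<in>set w. u \<le> x"
    using second_least_above[of ts "nat k" p] lt k dt ts by (auto simp: nat_add_distrib)
  have lu: "length u = length X" using u(1) ts by blast
  have "HT1 num \<Gamma>' (Atl u q (Pre (num k)))"
    by (rule Atl_intro[OF k og' lu l(2) w(1,2)]) (use w ts gt u in auto)
  moreover have "HT1 num \<Gamma>' (lexless (map Pre p) (map Pre u))"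
    by (rule HT1_lexless[OF og' u(2)]) (use l lu in simp)
  moreover have "map (tuple_asg W u) W = u" using map_tuple_asg[OF W_distinct, of u] lu by simp
  ultimately have "HT1 num \<Gamma>' (fsubst (ground_on (set W) (tuple_asg W u)) (succ_witness p q k))"
    by (simp only: fsubst_succ_witness HT1_conjI)
  then have "HT1 num \<Gamma>' (exs W (succ_witness p q k))"
    by (rule HT1_exsI_ground[OF _ W_distinct _ succ_witness_props(2)[OF l]]) (auto simp: sortok_on_def)
  then show "HT1 num \<Gamma>' (succ_rhs p q k)" unfolding succ_rhs_def by (rule HT1_conjI[OF gp])
qed

lemma Atl_add_below:
  assumes og: "sig1_ctx num \<Gamma>" and cl: "\<Union>(fv ` \<Gamma>) = {}"
    and l: "length p = length X" "length q = length V" "length u = length X"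
    and k: "0 < k" and pu: "p < u" and gp: "HT1 num \<Gamma> (G_at p q)"
    and d: "HT1 num \<Gamma> (Atl u q (Pre (num k)))"
  shows "HT1 num \<Gamma> (Atl p q (Pre (num (k + 1))))"
proof (rule Atl_elim[OF k d l(3,2) cl])
  show "fv (Atl p q (Pre (num (k + 1)))) = {}" "sig1 num (Atl p q (Pre (num (k + 1))))"
    using Atl_sig1[OF l(1,2)] by simp_all
  fix w \<Gamma>' assume lw: "length w = nat k" and dw: "distinct w"
    and ws: "\<forall>t\<in>set w. u \<le> t \<and> length t = length X"
    and sub: "\<Gamma> \<subseteq> \<Gamma>'" and og': "sig1_ctx num \<Gamma>'" and gw: "\<forall>t\<in>set w. HT1 num \<Gamma>' (G_at t q)"
  have gp': "HT1 num \<Gamma>' (G_at p q)" by (rule HT1_weaken[OF gp sub og'])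
  have "\<forall>t\<in>set w. p < t" using ws pu by auto
  then show "HT1 num \<Gamma>' (Atl p q (Pre (num (k + 1))))"
    by (intro Atl_intro[OF _ og' l(1,2), where ts="p # w"])
      (use k lw dw ws l gp' gw in \<open>auto simp: nat_add_distrib\<close>)
qed

lemma Atl_succ_intro:
  assumes og: "sig1_ctx num \<Gamma>" and cl: "\<Union>(fv ` \<Gamma>) = {}"
    and l: "length p = length X" "length q = length V"
    and k: "0 < k" and d: "HT1 num \<Gamma> (succ_rhs p q k)"
  shows "HT1 num \<Gamma> (Atl p q (Pre (num (k + 1))))"
proof -
  have gp: "HT1 num \<Gamma> (G_at p q)" and e: "HT1 num \<Gamma> (exs W (succ_witness p q k))"
    using d unfolding succ_rhs_def by (rule HT1_conjunct1, rule HT1_conjunct2)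
  let ?C = "Atl p q (Pre (num (k + 1)))"
  have sC: "sig1 num ?C" by (rule Atl_sig1[OF l])
  show ?thesis
  proof (rule HT1_exsE_ground[OF e W_distinct sC])
    show "\<forall>v\<in>set W. v \<notin> \<Union>(fv ` \<Gamma>) \<and> v \<notin> fv ?C" using cl by simp
    fix c assume c: "sortok_on num (set W) c"
    let ?u = "map c W"
    let ?H = "fsubst (ground_on (set W) c) (succ_witness p q k)"
    have "sig1 num ?H" by (rule sig1_fsubst_ground_on[OF succ_witness_props(2)[OF l] c])
    then have og': "sig1_ctx num (insert ?H \<Gamma>)" using og by simp
    have "fv ?H \<subseteq> (\<Union>v\<in>fv (succ_witness p q k). tvars (ground_on (set W) c v))" by (rule fv_fsubst)
    also have "\<dots> = {}" using succ_witness_props(1)[OF l, of k] by (auto simp: ground_on_def)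
    finally have cl': "\<Union>(fv ` insert ?H \<Gamma>) = {}" using cl by simp
    have lu: "length ?u = length X" by simp
    have "HT1 num (insert ?H \<Gamma>) ?H" by (rule HT1_hyp[OF _ og']) simp
    then have h: "HT1 num (insert ?H \<Gamma>) (And (lexless (map Pre p) (map Pre ?u)) (Atl ?u q (Pre (num k))))"
      unfolding fsubst_succ_witness[OF refl] .
    show "HT1 num (insert ?H \<Gamma>) ?C"
    proof (cases "p < ?u")
      case False
      then have "\<not> sat num (\<lambda>_. num 0) (lexless (map Pre p) (map Pre ?u))"
        using sat_lexless[of p ?u num] l by simp
      then show ?thesis by (rule HT1_false[OF HT1_conjunct1[OF h] lexless_props(3) lexless_ground_props(1) _ sC])
    next
      case True
      have "HT1 num (insert ?H \<Gamma>) (G_at p q)" by (rule HT1_weaken[OF gp _ og']) blast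
      then show ?thesis by (rule Atl_add_below[OF og' cl' l lu k True _ HT1_conjunct2[OF h]])
    qed
  qed
qed

lemma D0_succ_ground:
  assumes og: "sig1_ctx num \<Gamma>" and cl: "\<Union>(fv ` \<Gamma>) = {}"
    and l: "length p = length X" "length q = length V"
  shows "HT1 num \<Gamma> (Imp (Cmp cmp.Gt (Pre (num k)) (Pre (num 0)))
            (Iff (Atl p q (Plus (Pre (num k)) (Pre (num 1)))) (succ_rhs p q k)))"
proof (rule HT1_impI[OF _ og])
  let ?C = "Cmp cmp.Gt (Pre (num k)) (Pre (num 0))"
  let ?A = "Atl p q (Plus (Pre (num k)) (Pre (num 1)))"
  have og1: "sig1_ctx num (insert ?C \<Gamma>)" using og by simp
  have cl1: "\<Union>(fv ` insert ?C \<Gamma>) = {}" using cl by simp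
  have sR: "sig1 num (succ_rhs p q k)" and fR: "fv (succ_rhs p q k) = {}" by (rule succ_rhs_closed[OF l])+
  have sA: "sig1 num ?A" using aggwf_K l by (auto simp: sig1_def aggwf_def gtrm_def)
  show "HT1 num (insert ?C \<Gamma>) (Iff ?A (succ_rhs p q k))"
  proof (cases "0 < k")
    case False
    have h: "HT1 num (insert ?C \<Gamma>) ?C" by (rule HT1_hyp[OF _ og1]) simp
    have "\<not> sat num (\<lambda>_. num 0) ?C" using False mono by (simp add: strict_mono_less)
    then show ?thesis by (rule HT1_false[OF h, rotated 2]) (use sA sR in simp_all)
  next
    case True
    show ?thesis
    proof (rule HT1_iffI; rule HT1_impI[OF _ og1])
      have og2: "sig1_ctx num (insert ?A (insert ?C \<Gamma>))" using og1 sA by simp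
      have "HT1 num (insert ?A (insert ?C \<Gamma>)) ?A" by (rule HT1_hyp[OF _ og2]) simp
      then have "HT1 num (insert ?A (insert ?C \<Gamma>)) (Atl p q (Pre (num (k + 1))))"
        using Atleast_succ_iff_Plus[OF mono] by blast
      moreover have "\<Union>(fv ` insert ?A (insert ?C \<Gamma>)) = {}" using cl1 by simp
      ultimately show "HT1 num (insert ?A (insert ?C \<Gamma>)) (succ_rhs p q k)"
        using Atl_succ_dest[OF og2 _ l True] by blast
    next
      let ?\<Gamma> = "insert (succ_rhs p q k) (insert ?C \<Gamma>)"
      have og2: "sig1_ctx num ?\<Gamma>" using og1 sR by simp
      have "HT1 num ?\<Gamma> (succ_rhs p q k)" by (rule HT1_hyp[OF _ og2]) simp
      moreover have "\<Union>(fv ` ?\<Gamma>) = {}" using cl1 fR by simp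
      ultimately have "HT1 num ?\<Gamma> (Atl p q (Pre (num (k + 1))))"
        using Atl_succ_intro[OF og2 _ l True] by blast
      then show "HT1 num ?\<Gamma> ?A" using Atleast_succ_iff_Plus[OF mono] by blast
    qed
  qed
qed

abbreviation "N \<equiv> IV (freshb G (X @ V))"
abbreviation "XVN \<equiv> set (X @ V @ [N])"

lemma XVN_distinct: "distinct (X @ V @ [N])"
proof -
  have "N \<notin> set (X @ V)" using agg_props(2) by fastforce
  then show ?thesis using agg_props(1) by simp
qed

lemma ground_on_XVN_W: "v \<in> set W \<Longrightarrow> ground_on XVN c v = Var v"
proof -
  have "\<And>v. v \<in> set (X @ V) \<Longrightarrow> vidx v < freshb G (X @ V)" by (rule freshb_gt) simp
  then have "\<And>j. GV (freshb G (X @ V) + 1 + j) \<notin> set (X @ V)" by fastforce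
  then show "v \<in> set W \<Longrightarrow> ground_on XVN c v = Var v" by (auto simp: ground_on_def)
qed

lemma ground_on_XVN:
  "map (ground_on XVN c) X = map Pre (map c X)" "map (ground_on XVN c) V = map Pre (map c V)"
  "ground_on XVN c N = Pre (c N)"
  by (auto simp: ground_on_def)

lemma fsubst_G_ground_on_XVN: "fsubst (ground_on XVN c) G = G_at (map c X) (map c V)"
  by (rule fsubst_G_eq_G_at) (simp_all only: map_append ground_on_XVN length_map)

lemma D0_nonpos_derivable:
  "HT1 num {} (elim_start (alls (X @ V @ [N]) (Imp (Cmp Le (Var N) (Pre (num 0)))
      (Start X V G (map Var X) (map Var V) (Var N)))))"
proof -
  let ?B = "Imp (Cmp Le (Var N) (Pre (num 0))) (Atleast U (X @ V) K (map Var X @ map Var V) (Var N))"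
  have "HT1 num {} (alls (X @ V @ [N]) ?B)"
  proof (rule HT1_allsI_ground[OF XVN_distinct sig1_ctx_empty])
    show "sig1 num ?B" using aggwf_K by (auto simp: sig1_def aggwf_def)
    fix c assume "sortok_on num XVN c"
    then obtain k where k: "c N = num k" by (auto simp: sortok_on_def)
    have "fsubst (ground_on XVN c) ?B
        = Imp (Cmp Le (Pre (num k)) (Pre (num 0))) (Atl (map c X) (map c V) (Pre (num k)))"
      by (simp only: fsubst.simps tsubst.simps map_append map_tsubst_Var ground_on_XVN k)
    then show "HT1 num {} (fsubst (ground_on XVN c) ?B)" by (simp only: D0_nonpos_ground sig1_ctx_empty length_map)
  qed
  then show ?thesis by simp
qed

lemma D0_one_derivable:
  "HT1 num {} (elim_start (alls (X @ V) (Iff (Start X V G (map Var X) (map Var V) (Pre (num 1))) G)))"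
proof -
  let ?B = "Iff (Atleast U (X @ V) K (map Var X @ map Var V) (Pre (num 1))) G"
  have "HT1 num {} (alls (X @ V) ?B)"
  proof (rule HT1_allsI_ground[OF agg_props(1) sig1_ctx_empty])
    show "sig1 num ?B" using aggwf_K agg_props(3,5) by (auto simp: sig1_def aggwf_def base_noStart)
    fix c :: "var \<Rightarrow> 'p"
    have m: "map (ground_on (set (X @ V)) c) X = map Pre (map c X)"
      "map (ground_on (set (X @ V)) c) V = map Pre (map c V)" by (auto simp: ground_on_def)
    have "fsubst (ground_on (set (X @ V)) c) G = G_at (map c X) (map c V)"
      by (rule fsubst_G_eq_G_at) (simp_all only: map_append m length_map)
    then have "fsubst (ground_on (set (X @ V)) c) ?B
        = Iff (Atl (map c X) (map c V) (Pre (num 1))) (G_at (map c X) (map c V))"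
      by (simp only: fsubst_Iff fsubst.simps tsubst.simps map_append map_tsubst_Var m)
    then show "HT1 num {} (fsubst (ground_on (set (X @ V)) c) ?B)"
      by (simp only: D0_one_ground sig1_ctx_empty length_map Union_empty image_empty)
  qed
  then show ?thesis using agg_props(3) by (simp add: elim_start_noStart base_noStart)
qed

lemma D0_succ_derivable:
  "HT1 num {} (elim_start (alls (X @ V @ [N]) (Imp (Cmp cmp.Gt (Var N) (Pre (num 0)))
     (Iff (Start X V G (map Var X) (map Var V) (Plus (Var N) (Pre (num 1))))
          (And G (exs W (And (lexless (map Var X) (map Var W)) (Start X V G (map Var W) (map Var V) (Var N)))))))))"
proof -
  let ?R = "And (lexless (map Var X) (map Var W)) (Atleast U (X @ V) K (map Var W @ map Var V) (Var N))"
  let ?B = "Imp (Cmp cmp.Gt (Var N) (Pre (num 0)))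
     (Iff (Atleast U (X @ V) K (map Var X @ map Var V) (Plus (Var N) (Pre (num 1)))) (And G (exs W ?R)))"
  have "HT1 num {} (alls (X @ V @ [N]) ?B)"
  proof (rule HT1_allsI_ground[OF XVN_distinct sig1_ctx_empty])
    have "wf num (lexless (map Var X) (map Var W))" by (rule wf_lexless) auto
    then show "sig1 num ?B" using aggwf_K agg_props(3,5) by (auto simp: sig1_def aggwf_def base_noStart gtrm_def)
    fix c assume "sortok_on num XVN c"
    then obtain k where k: "c N = num k" by (auto simp: sortok_on_def)
    have W: "map (ground_on XVN c) W = map Var W" by (rule map_cong[OF refl ground_on_XVN_W])
    have "fsubst (ground_on XVN c) ?R = succ_witness (map c X) (map c V) k"
      unfolding succ_witness_def
      by (simp only: fsubst_lexless fsubst.simps tsubst.simps map_append map_tsubst_Var ground_on_XVN k W)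
    then have "fsubst (ground_on XVN c) (exs W ?R) = exs W (succ_witness (map c X) (map c V) k)"
      by (simp only: fsubst_exs[OF ballI[OF ground_on_XVN_W]])
    then have "fsubst (ground_on XVN c) ?B = Imp (Cmp cmp.Gt (Pre (num k)) (Pre (num 0)))
        (Iff (Atl (map c X) (map c V) (Plus (Pre (num k)) (Pre (num 1)))) (succ_rhs (map c X) (map c V) k))"
      unfolding succ_rhs_def
      by (simp only: fsubst_Iff fsubst.simps tsubst.simps map_append map_tsubst_Var ground_on_XVN k
          fsubst_G_ground_on_XVN)
    then show "HT1 num {} (fsubst (ground_on XVN c) ?B)"
      by (simp only: D0_succ_ground sig1_ctx_empty length_map Union_empty image_empty)
  qed
  then show ?thesis using agg_props(3) by (simp add: elim_start_noStart base_noStart)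
qed
end

lemma elim_start_D0_derivable:
  assumes "strict_mono num" and "F \<in> D0 num"
  shows "HT1 num {} (elim_start F)"
proof -
  obtain X V G where "aggwf num X V G" and F: "F \<in> (let b = freshb G (X @ V); N = IV b;
                   U = map (\<lambda>j. GV (b + 1 + j)) [0..<length X];
                   Xs = map Var X; Vs = map Var V; Us = map Var U in
      { alls (X @ V @ [N]) (Imp (Cmp Le (Var N) (Pre (num 0))) (Start X V G Xs Vs (Var N))),
        alls (X @ V) (Iff (Start X V G Xs Vs (Pre (num 1))) G),
        alls (X @ V @ [N]) (Imp (Cmp Gt (Var N) (Pre (num 0)))
           (Iff (Start X V G Xs Vs (Plus (Var N) (Pre (num 1))))
                (And G (exs U (And (lexless Xs Us) (Start X V G Us Vs (Var N)))))))})"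
    using assms(2) unfolding D0_def by blast
  then interpret start_setting num X V G using assms(1) by unfold_locales
  show ?thesis
    using F D0_nonpos_derivable D0_one_derivable D0_succ_derivable by (auto simp: Let_def)
qed

theorem lemma9:
  fixes num :: "int \<Rightarrow> 'p::linorder" and F :: "'p form"
  assumes "strict_mono num"
    and "\<forall>p m n. num m \<le> p \<and> p \<le> num n \<longrightarrow> (\<exists>k. p = num k)"
    and "sentence1 num F"
    and "HTsharp2_from num (D0 num) F"
  shows "HTsharp num F"
proof -
  have "deriv num (sig2 num) (HTax num \<union> D0 num) {} F"
    using assms(4) by (simp add: HTsharp2_from_def)
  then have "HT1 num (elim_start ` {}) (elim_start F)"
    using elim_start_D0_derivable[OF assms(1)] by (rule deriv_elim_start)
  moreover have "elim_start F = F"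
    using assms(3) by (intro elim_start_noStart) (simp add: sentence1_def sig1_def)
  ultimately show ?thesis by (simp add: HTsharp_def)
qed

end
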